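(* Every 4-regular graph with girth 4 has a strong edge-coloring using at most 22 colors.
   Context: A strong edge-coloring of a graph is a proper edge-coloring in which, in addition, no two edges of the same color lie on a common path of length three. The girth of a graph is the length of its shortest cycle (a loop counts as a cycle of length 1 and a pair of parallel edges as a cycle of length 2). *)

theory Defs
  imports Main "HOL-Library.Extended_Nat"
begin

text \<open>A finite simple graph: finite vertex set V, edges are 2-element subsets of V.
  (Girth 4 excludes loops and parallel edges, so simple graphs suffice.)\<close>

definition simple_graph :: "'a set \<Rightarrow> 'a set set \<Rightarrow> bool" where
  "simple_graph V E \<longleftrightarrow> finite V \<and> (\<forall>e\<in>E. e \<subseteq> V \<and> card e = 2)"

definition degree :: "'a set set \<Rightarrow> 'a \<Rightarrow> nat" where
  "degree E v = card {e \<in> E. v \<in> e}"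

definition regular :: "'a set \<Rightarrow> 'a set set \<Rightarrow> nat \<Rightarrow> bool" where
  "regular V E d \<longleftrightarrow> (\<forall>v\<in>V. degree E v = d)"

definition has_cycle :: "'a set \<Rightarrow> 'a set set \<Rightarrow> nat \<Rightarrow> bool" where
  "has_cycle V E k \<longleftrightarrow> k \<ge> 3 \<and> (\<exists>xs. length xs = k \<and> distinct xs \<and> set xs \<subseteq> V \<and>
      (\<forall>i<k. {xs ! i, xs ! ((i + 1) mod k)} \<in> E))"

definition girth :: "'a set \<Rightarrow> 'a set set \<Rightarrow> enat" where
  "girth V E = (if \<exists>k. has_cycle V E k then enat (LEAST k. has_cycle V E k) else \<infinity>)"

definition on_common_path3 :: "'a set set \<Rightarrow> 'a set \<Rightarrow> 'a set \<Rightarrow> bool" where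
  "on_common_path3 E e f \<longleftrightarrow> (\<exists>u v w x. distinct [u, v, w, x] \<and>
      {u, v} \<in> E \<and> {v, w} \<in> E \<and> {w, x} \<in> E \<and>
      e \<in> {{u, v}, {v, w}, {w, x}} \<and> f \<in> {{u, v}, {v, w}, {w, x}})"

definition strong_edge_coloring :: "'a set set \<Rightarrow> ('a set \<Rightarrow> 'c) \<Rightarrow> bool" where
  "strong_edge_coloring E c \<longleftrightarrow>
     (\<forall>e\<in>E. \<forall>f\<in>E. e \<noteq> f \<and> e \<inter> f \<noteq> {} \<longrightarrow> c e \<noteq> c f) \<and>
     (\<forall>e\<in>E. \<forall>f\<in>E. e \<noteq> f \<and> on_common_path3 E e f \<longrightarrow> c e \<noteq> c f)"

end

theory Submission
  imports Defs
begin

text \<open>An edge \<open>uv\<close> conflicts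
  with at most 24 edges, one fewer for every edge between \<open>N(u) - v\<close> and \<open>N(v) - u\<close>, since such
  edges are reached from both ends. Each connected component is coloured greedily, from the edges
  farthest from a root (a 4-cycle if the component has one, else a vertex) towards the four
  pairwise conflicting root edges: every other edge still has three uncoloured conflicting edges on
  the way to the root when it is coloured, so one of 22 colours is free. The root edges, coloured
  last, need savings of one, two and three colours for the second, third and fourth of them. These
  come from edges between the neighbourhoods of the 4-cycle, and from giving a single colour to two
  or three pairwise non-conflicting edges that conflict with the root edges; a case analysis of the
  vertices near the root produces such edges.\<close>

section \<open>Greedy colouring\<close>

lemma greedy_colouring:
  fixes rank :: "'b \<Rightarrow> 'c::linorder"
  assumes "finite X" and "symp R"
    and "\<And>x. x \<in> X \<Longrightarrow> card {y \<in> X. R x y \<and> y \<noteq> x \<and> rank y \<le> rank x} \<le> k"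
  shows "\<exists>col. (\<forall>x\<in>X. col x \<le> k) \<and> (\<forall>x\<in>X. \<forall>y\<in>X. R x y \<and> x \<noteq> y \<longrightarrow> col x \<noteq> col y)"
proof -
  have "\<exists>col. (\<forall>x\<in>S. col x \<le> k) \<and> (\<forall>x\<in>S. \<forall>y\<in>S. R x y \<and> x \<noteq> y \<longrightarrow> col x \<noteq> col y)"
    if "S \<subseteq> X" for S
    using finite_subset[OF that assms(1)] that
  proof (induction S rule: finite_ranking_induct[where f = rank])
    case empty
    then show ?case by simp
  next
    case (insert x S)
    then obtain col where col: "\<forall>y\<in>S. col y \<le> k" "\<forall>y\<in>S. \<forall>z\<in>S. R y z \<and> y \<noteq> z \<longrightarrow> col y \<noteq> col z"
      by auto
    let ?N = "{y \<in> S. R x y \<and> y \<noteq> x}"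
    have "?N \<subseteq> {y \<in> X. R x y \<and> y \<noteq> x \<and> rank y \<le> rank x}"
      using insert by auto
    then have "card ?N \<le> card {y \<in> X. R x y \<and> y \<noteq> x \<and> rank y \<le> rank x}"
      using assms(1) by (intro card_mono) auto
    also have "\<dots> \<le> k"
      using assms(3) insert.prems by simp
    finally have "card (col ` ?N) < card {0..k}"
      using card_image_le[of ?N col] insert.hyps(1) by simp
    moreover have "finite (col ` ?N)"
      using insert.hyps(1) by simp
    ultimately have "\<not> {0..k} \<subseteq> col ` ?N"
      using card_mono not_le by blast
    then obtain c where c: "c \<in> {0..k}" "c \<notin> col ` ?N" by blast
    show ?case
    proof (intro exI[of _ "col(x := c)"] conjI ballI impI)
      fix y assume "y \<in> insert x S"
      then show "(col(x := c)) y \<le> k" using col c by auto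
    next
      fix y z assume yz: "y \<in> insert x S" "z \<in> insert x S" "R y z \<and> y \<noteq> z"
      have "R x y" if "R y x" using assms(2) that by (simp add: symp_def)
      then show "(col(x := c)) y \<noteq> (col(x := c)) z"
        using col c yz by (auto simp: image_iff)
    qed
  qed
  then show ?thesis by blast
qed

lemma greedy_colouring_quotient:
  fixes q :: "'b \<Rightarrow> 'c" and rank :: "'c \<Rightarrow> 'd::linorder"
  assumes "finite S" and "symp C"
    and "\<And>e f. e \<in> S \<Longrightarrow> f \<in> S \<Longrightarrow> C e f \<Longrightarrow> q e \<noteq> q f"
    and "\<And>x. x \<in> q ` S \<Longrightarrow>
      card {y \<in> q ` S. (\<exists>e\<in>S. \<exists>f\<in>S. q e = x \<and> q f = y \<and> C e f) \<and> y \<noteq> x \<and> rank y \<le> rank x} \<le> k"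
  shows "\<exists>col. (\<forall>e\<in>S. col e \<le> k) \<and> (\<forall>e\<in>S. \<forall>f\<in>S. C e f \<longrightarrow> col e \<noteq> col f)"
proof -
  define R where "R x y \<longleftrightarrow> (\<exists>e\<in>S. \<exists>f\<in>S. q e = x \<and> q f = y \<and> C e f)" for x y
  have "symp R"
    using assms(2) unfolding R_def symp_def by blast
  then obtain col where col: "\<forall>x\<in>q ` S. \<forall>y\<in>q ` S. R x y \<and> x \<noteq> y \<longrightarrow> col x \<noteq> col y"
    and "\<forall>x\<in>q ` S. col x \<le> k"
    using greedy_colouring[of "q ` S" R rank k] assms(1,4) unfolding R_def by auto
  show ?thesis
  proof (intro exI[of _ "col \<circ> q"] conjI ballI impI)
    fix e f assume ef: "e \<in> S" "f \<in> S" "C e f"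
    then have "R (q e) (q f)" unfolding R_def by blast
    then show "(col \<circ> q) e \<noteq> (col \<circ> q) f" using col assms(3) ef by simp
  qed (use \<open>\<forall>x\<in>q ` S. col x \<le> k\<close> in simp)
qed

lemma card_filter_le_if_excluded:
  assumes "finite T" and "Z \<subseteq> T" and "card T \<le> k + card Z" and "\<And>z. z \<in> Z \<Longrightarrow> \<not> P z"
  shows "card {y \<in> T. P y} \<le> k"
proof -
  have "card {y \<in> T. P y} \<le> card (T - Z)"
    using assms(1,4) by (intro card_mono) auto
  also have "\<dots> = card T - card Z"
    using assms(1,2) by (simp add: card_Diff_subset finite_subset)
  finally show ?thesis using assms(3) by linarith
qed

lemma card_image_le_card_Diff:
  assumes "finite N" and "G \<subseteq> N" and "\<And>g. g \<in> G \<Longrightarrow> \<exists>h\<in>N - G. f g = f h"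
  shows "card (f ` N) \<le> card N - card G"
proof -
  have "f ` N = f ` (N - G)"
    using assms(3) by (auto simp: image_iff)
  then have "card (f ` N) \<le> card (N - G)"
    using card_image_le[of "N - G" f] assms(1) by simp
  also have "\<dots> = card N - card G"
    using assms(1,2) by (simp add: card_Diff_subset finite_subset)
  finally show ?thesis .
qed

lemma split_avoiding:
  assumes d: "distinct [s1,s2,t1,t2]"
    and P: "\<And>x y. x \<in> {s1,s2,t1,t2} \<Longrightarrow> y \<in> {s1,s2,t1,t2} \<Longrightarrow> P x \<Longrightarrow> P y \<Longrightarrow> x = y"
    and Q: "\<And>x y. x \<in> {s1,s2,t1,t2} \<Longrightarrow> y \<in> {s1,s2,t1,t2} \<Longrightarrow> Q x \<Longrightarrow> Q y \<Longrightarrow> x = y"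
    and PQ: "\<And>x. x \<in> {s1,s2,t1,t2} \<Longrightarrow> P x \<Longrightarrow> Q x \<Longrightarrow> False"
  obtains s s' t t' where "{s,s'} = {s1,s2}" "{t,t'} = {t1,t2}" "\<not> P s" "\<not> P t" "\<not> Q s'" "\<not> Q t'"
proof -
  have "\<not> (P s1 \<and> P s2)" "\<not> (P t1 \<and> P t2)" "\<not> (Q s1 \<and> Q s2)" "\<not> (Q t1 \<and> Q t2)"
    using P[of s1 s2] P[of t1 t2] Q[of s1 s2] Q[of t1 t2] d by auto
  moreover have "\<not> (P x \<and> Q x)" if "x \<in> {s1,s2,t1,t2}" for x using PQ that by blast
  ultimately have "(\<not> P s1 \<and> \<not> Q s2) \<or> (\<not> P s2 \<and> \<not> Q s1)" "(\<not> P t1 \<and> \<not> Q t2) \<or> (\<not> P t2 \<and> \<not> Q t1)"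
    by blast+
  then show ?thesis using that by (metis insert_commute)
qed

section \<open>Conflicting edges in a 4-regular triangle-free graph\<close>

locale quartic_triangle_free =
  fixes V :: "'a set" and E :: "'a set set"
  assumes simple: "simple_graph V E"
    and quartic: "regular V E 4"
    and triangle_free: "{x,y} \<in> E \<Longrightarrow> {y,z} \<in> E \<Longrightarrow> {x,z} \<in> E \<Longrightarrow> False"
begin

definition nbhd :: "'a \<Rightarrow> 'a set" where
  "nbhd v = {w. {v,w} \<in> E}"

definition incident :: "'a \<Rightarrow> 'a set set" where
  "incident v = {e \<in> E. v \<in> e}"

definition conflict :: "'a set \<Rightarrow> 'a set \<Rightarrow> bool" where
  "conflict e f \<longleftrightarrow> e \<noteq> f \<and> (e \<inter> f \<noteq> {} \<or> on_common_path3 E e f)"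

definition conflicts :: "'a set \<Rightarrow> 'a set set" where
  "conflicts e = {f \<in> E. conflict e f}"

definition links :: "'a \<Rightarrow> 'a \<Rightarrow> 'a set set" where
  "links u v = {g \<in> E. \<exists>x y. g = {x,y} \<and> x \<in> nbhd u - {v} \<and> y \<in> nbhd v - {u}}"

definition side :: "'a \<Rightarrow> 'a \<Rightarrow> 'a set set" where
  "side u v = incident u \<union> (\<Union>w\<in>nbhd u - {v}. incident w - {{u,w}})"

definition edges_within :: "'a set \<Rightarrow> 'a set set" where
  "edges_within K = {e \<in> E. e \<subseteq> K}"

definition strong_colouring :: "nat \<Rightarrow> 'a set \<Rightarrow> ('a set \<Rightarrow> nat) \<Rightarrow> bool" where
  "strong_colouring k K c \<longleftrightarrow> (\<forall>e\<in>edges_within K. c e < k) \<and>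
     (\<forall>e\<in>edges_within K. \<forall>f\<in>edges_within K. conflict e f \<longrightarrow> c e \<noteq> c f)"

definition strongly_colourable :: "nat \<Rightarrow> 'a set \<Rightarrow> bool" where
  "strongly_colourable k K \<longleftrightarrow> (\<exists>c. strong_colouring k K c)"

lemma finite_V: "finite V"
  using simple by (simp add: simple_graph_def)

lemma finite_E: "finite E"
proof -
  have "E \<subseteq> Pow V" using simple by (auto simp: simple_graph_def)
  then show ?thesis using finite_V finite_subset by blast
qed

lemma edgeE:
  assumes "e \<in> E"
  obtains x y where "e = {x,y}" "x \<noteq> y" "x \<in> V" "y \<in> V"
proof -
  have "card e = 2" "e \<subseteq> V" using simple assms by (auto simp: simple_graph_def)
  then show ?thesis using that by (auto simp: card_2_iff)
qed

lemma edge_at: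
  assumes "e \<in> E" "x \<in> e"
  obtains y where "e = {x,y}"
  using assms by (elim edgeE) (auto simp: insert_commute)

lemma adj_distinct:
  assumes "{x,y} \<in> E"
  shows "x \<noteq> y"
proof
  assume "x = y"
  moreover have "card {x,y} = 2" using simple assms unfolding simple_graph_def by blast
  ultimately show False by simp
qed

lemma adj_in_V: "{x,y} \<in> E \<Longrightarrow> x \<in> V \<and> y \<in> V"
  using simple by (auto simp: simple_graph_def)

lemma no_empty_edge: "{} \<notin> E"
  using simple by (force simp: simple_graph_def)

lemma nbhd_sym: "w \<in> nbhd v \<longleftrightarrow> v \<in> nbhd w"
  by (simp add: nbhd_def insert_commute)

lemma finite_nbhd: "finite (nbhd v)"
proof (rule finite_subset[OF _ finite_V])
  show "nbhd v \<subseteq> V" using adj_in_V by (auto simp: nbhd_def)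
qed

lemma incident_eq_image: "incident v = (\<lambda>w. {v,w}) ` nbhd v"
proof
  show "incident v \<subseteq> (\<lambda>w. {v,w}) ` nbhd v"
  proof
    fix e assume "e \<in> incident v"
    then have "e \<in> E" "v \<in> e" by (auto simp: incident_def)
    then obtain w where "e = {v,w}" by (rule edge_at)
    then show "e \<in> (\<lambda>w. {v,w}) ` nbhd v" using \<open>e \<in> E\<close> by (auto simp: nbhd_def)
  qed
qed (auto simp: incident_def nbhd_def)

lemma card_incident_eq_card_nbhd: "card (incident v) = card (nbhd v)"
  unfolding incident_eq_image by (rule card_image) (auto simp: inj_on_def doubleton_eq_iff)

lemma card_nbhd: "v \<in> V \<Longrightarrow> card (nbhd v) = 4"
  using quartic card_incident_eq_card_nbhd by (simp add: regular_def degree_def incident_def)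

lemma card_incident: "v \<in> V \<Longrightarrow> card (incident v) = 4"
  using card_nbhd card_incident_eq_card_nbhd by simp

lemma finite_incident: "finite (incident v)"
  using finite_nbhd by (simp add: incident_eq_image)

lemma nbhd_obtain1:
  assumes "x \<in> nbhd v"
  obtains b c d where "nbhd v = {x,b,c,d}" "distinct [x,b,c,d]"
proof -
  have "v \<in> V" using assms adj_in_V by (auto simp: nbhd_def)
  then have "card (nbhd v - {x}) = 3"
    using card_nbhd[of v] assms finite_nbhd by (simp add: card_Diff_singleton)
  then obtain b c d where bcd: "nbhd v - {x} = {b,c,d}" "distinct [b,c,d]"
    by (auto simp: card_3_iff)
  have "nbhd v = {x,b,c,d}" using bcd(1) assms by blast
  moreover have "x \<notin> {b,c,d}" using bcd(1) by blast
  ultimately show ?thesis using that bcd(2) by simp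
qed

lemma nbhd_obtain2:
  assumes "x \<in> nbhd v" "y \<in> nbhd v" "x \<noteq> y"
  obtains c d where "nbhd v = {x,y,c,d}" "distinct [x,y,c,d]"
proof -
  obtain b c d where bcd: "nbhd v = {x,b,c,d}" "distinct [x,b,c,d]"
    by (rule nbhd_obtain1[OF assms(1)])
  then consider "y = b" | "y = c" | "y = d" using assms by auto
  then show ?thesis
  proof cases
    case 1
    then show ?thesis using that[of c d] bcd by simp
  next
    case 2
    have "{x,b,c,d} = {x,c,b,d}" by blast
    then show ?thesis using that[of b d] bcd 2 by auto
  next
    case 3
    have "{x,b,c,d} = {x,d,b,c}" by blast
    then show ?thesis using that[of b c] bcd 3 by auto
  qed
qed

lemma nbhd_obtain3:
  assumes "x \<in> nbhd v" "y \<in> nbhd v" "z \<in> nbhd v" "distinct [x,y,z]"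
  obtains d where "nbhd v = {x,y,z,d}" "distinct [x,y,z,d]"
proof -
  have "x \<noteq> y" using assms(4) by simp
  then obtain c d where cd: "nbhd v = {x,y,c,d}" "distinct [x,y,c,d]"
    by (rule nbhd_obtain2[OF assms(1,2)])
  then consider "z = c" | "z = d" using assms by auto
  then show ?thesis
  proof cases
    case 1
    then show ?thesis using that[of d] cd by simp
  next
    case 2
    have "{x,y,c,d} = {x,y,d,c}" by blast
    then show ?thesis using that[of c] cd 2 by auto
  qed
qed

lemma conflict_sym: "conflict e f \<Longrightarrow> conflict f e"
  unfolding conflict_def on_common_path3_def by blast

lemma symp_conflict: "symp conflict"
  using conflict_sym by (auto simp: symp_def)

lemma not_conflict_self: "\<not> conflict e e"
  by (simp add: conflict_def)

lemma conflict_if_share: "e \<noteq> f \<Longrightarrow> x \<in> e \<Longrightarrow> x \<in> f \<Longrightarrow> conflict e f"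
  by (auto simp: conflict_def)

lemma conflict_path3:
  assumes "distinct [u,v,w,x]" "{u,v} \<in> E" "{v,w} \<in> E" "{w,x} \<in> E"
  shows "conflict {u,v} {w,x}"
proof -
  have "{u,v} \<noteq> {w,x}" using assms(1) by (auto simp: doubleton_eq_iff)
  moreover have "on_common_path3 E {u,v} {w,x}"
    unfolding on_common_path3_def using assms by blast
  ultimately show ?thesis by (simp add: conflict_def)
qed

lemma conflicts_path3:
  assumes "distinct [u,v,w,x]" "{u,v} \<in> E" "{v,w} \<in> E" "{w,x} \<in> E"
  shows "{w,x} \<in> conflicts {u,v}" "{u,v} \<in> conflicts {w,x}"
  using conflict_path3[OF assms] conflict_sym assms by (auto simp: conflicts_def)

lemma conflict_near:
  assumes "conflict e f"
  shows "\<exists>x\<in>e. \<exists>y\<in>f. y = x \<or> {x,y} \<in> E"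
proof (cases "e \<inter> f = {}")
  case True
  then have "on_common_path3 E e f" using assms by (simp add: conflict_def)
  then obtain u v w x where "{u,v} \<in> E" "{v,w} \<in> E" "{w,x} \<in> E"
    and "e = {u,v} \<or> e = {v,w} \<or> e = {w,x}" and "f = {u,v} \<or> f = {v,w} \<or> f = {w,x}"
    unfolding on_common_path3_def by blast
  then show ?thesis by (auto simp: insert_commute)
qed blast

lemma not_conflict_if_far:
  assumes "e \<inter> f = {}" "\<And>x y. x \<in> e \<Longrightarrow> y \<in> f \<Longrightarrow> {x,y} \<notin> E"
  shows "\<not> conflict e f"
  using conflict_near assms by blast

lemma not_conflict_far_edges:
  assumes "distinct [x1,x2,y1,y2]"
    and "{x1,y1} \<notin> E" "{x1,y2} \<notin> E" "{x2,y1} \<notin> E" "{x2,y2} \<notin> E"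
  shows "\<not> conflict {x1,x2} {y1,y2}"
  by (rule not_conflict_if_far) (use assms in auto)

lemma conflicts_incident:
  assumes "{a,b} \<in> E" "{u,a} \<in> E" "u \<noteq> b" "g \<in> incident u"
  shows "g \<in> conflicts {a,b}"
proof -
  have "a \<noteq> b" "u \<noteq> a" using adj_distinct assms by auto
  have "g \<in> E" "u \<in> g" using assms(4) by (auto simp: incident_def)
  then obtain w where g: "g = {u,w}" "g \<in> E" by (meson edge_at)
  have "conflict {a,b} g"
  proof (cases "w \<in> {a,b}")
    case True
    then show ?thesis using g \<open>u \<noteq> a\<close> assms(3) by (intro conflict_if_share) auto
  next
    case False
    have "conflict {w,u} {a,b}"
      by (rule conflict_path3) (use False adj_distinct assms g \<open>a \<noteq> b\<close> \<open>u \<noteq> a\<close> in \<open>auto simp: insert_commute\<close>)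
    then show ?thesis using conflict_sym g by (simp add: insert_commute)
  qed
  then show ?thesis using g by (simp add: conflicts_def)
qed

lemma finite_conflicts: "finite (conflicts e)"
  using finite_E by (simp add: conflicts_def)

lemma finite_links: "finite (links u v)"
  using finite_E by (simp add: links_def)

lemma linksI: "{x,y} \<in> E \<Longrightarrow> {u,x} \<in> E \<Longrightarrow> x \<noteq> v \<Longrightarrow> {v,y} \<in> E \<Longrightarrow> y \<noteq> u \<Longrightarrow> {x,y} \<in> links u v"
  unfolding links_def nbhd_def by blast

lemma card_side:
  assumes "{u,v} \<in> E"
  shows "card (side u v) \<le> 13"
proof -
  have u: "u \<in> V" and v: "v \<in> nbhd u" using adj_in_V assms by (auto simp: nbhd_def)
  have "card (\<Union>w\<in>nbhd u - {v}. incident w - {{u,w}}) \<le> (\<Sum>w\<in>nbhd u - {v}. card (incident w - {{u,w}}))"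
    by (rule card_UN_le) (simp add: finite_nbhd)
  also have "\<dots> = (\<Sum>w\<in>nbhd u - {v}. 3)"
  proof (rule sum.cong)
    fix w assume "w \<in> nbhd u - {v}"
    then have "w \<in> V" "{u,w} \<in> incident w" using adj_in_V by (auto simp: nbhd_def incident_def)
    then show "card (incident w - {{u,w}}) = 3"
      using card_incident finite_incident by (simp add: card_Diff_singleton)
  qed simp
  also have "\<dots> = 9"
    using card_nbhd[OF u] v finite_nbhd by (simp add: card_Diff_singleton)
  finally show ?thesis
    using card_Un_le[of "incident u" "\<Union>w\<in>nbhd u - {v}. incident w - {{u,w}}"] card_incident[OF u]
    unfolding side_def by linarith
qed

lemma finite_side: "finite (side u v)"
  using finite_incident finite_nbhd by (simp add: side_def)

lemma in_side:
  assumes "f \<in> E" "y \<in> f" "y = u \<or> (y \<in> nbhd u \<and> y \<noteq> v)"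
  shows "f \<in> side u v"
  using assms by (cases "f = {u,y}") (auto simp: side_def incident_def)

lemma conflicts_subset_sides:
  assumes "{u,v} \<in> E"
  shows "insert {u,v} (conflicts {u,v}) \<subseteq> side u v \<union> side v u"
proof
  fix f assume "f \<in> insert {u,v} (conflicts {u,v})"
  then consider "f = {u,v}" | "f \<in> E" "conflict {u,v} f" by (auto simp: conflicts_def)
  then show "f \<in> side u v \<union> side v u"
  proof cases
    case 1
    then show ?thesis using assms by (auto simp: side_def incident_def)
  next
    case 2
    then obtain x y where "x \<in> {u,v}" "y \<in> f" "y = x \<or> {x,y} \<in> E"
      using conflict_near by blast
    then show ?thesis using 2 in_side[of f y u v] in_side[of f y v u] by (auto simp: nbhd_def)
  qed
qed

lemma links_subset_sides:
  assumes "{u,v} \<in> E"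
  shows "insert {u,v} (links u v) \<subseteq> side u v \<inter> side v u"
proof
  fix g assume "g \<in> insert {u,v} (links u v)"
  then consider "g = {u,v}" | x y where "g \<in> E" "g = {x,y}" "x \<in> nbhd u - {v}" "y \<in> nbhd v - {u}"
    by (auto simp: links_def)
  then show "g \<in> side u v \<inter> side v u"
  proof cases
    case 1
    then show ?thesis using assms by (auto simp: side_def incident_def)
  next
    case 2
    then show ?thesis using in_side[of g x u v] in_side[of g y v u] by auto
  qed
qed

text \<open>The two sides of an edge cover its conflicts, and the edges of \<open>links u v\<close> lie
  in both sides, so they are counted twice in the naive bound 13 + 13.\<close>

lemma card_conflicts_links:
  assumes "{u,v} \<in> E"
  shows "card (conflicts {u,v}) + card (links u v) \<le> 24"
proof -
  have "{u,v} \<notin> conflicts {u,v}" by (simp add: conflicts_def not_conflict_self)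
  moreover have "{u,v} \<notin> links u v"
    by (auto simp: links_def nbhd_def doubleton_eq_iff dest: adj_distinct)
  moreover have "card (insert {u,v} (conflicts {u,v})) \<le> card (side u v \<union> side v u)"
    by (intro card_mono conflicts_subset_sides assms) (simp add: finite_side)
  moreover have "card (insert {u,v} (links u v)) \<le> card (side u v \<inter> side v u)"
    by (intro card_mono links_subset_sides assms) (simp add: finite_side)
  moreover have "card (side u v \<union> side v u) + card (side u v \<inter> side v u) \<le> 26"
    using card_Un_Int[OF finite_side[of u v] finite_side[of v u]] card_side[OF assms] card_side[of v u] assms
    by (simp add: insert_commute)
  ultimately show ?thesis using finite_conflicts finite_links by simp
qed

lemma disjoint_if_not_conflict: "e \<noteq> f \<Longrightarrow> \<not> conflict e f \<Longrightarrow> e \<inter> f = {}"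
  by (auto simp: conflict_def)

lemma conflicts_not_self: "e \<notin> conflicts e"
  by (simp add: conflicts_def not_conflict_self)

lemma card_rep_conflicts_savings:
  assumes "{u,v} \<in> E" "G \<subseteq> conflicts {u,v}"
    and "\<And>g. g \<in> G \<Longrightarrow> \<exists>h\<in>conflicts {u,v} - G. rep g = rep h"
  shows "card (rep ` conflicts {u,v}) + card G + card (links u v) \<le> 24"
proof -
  have "card (rep ` conflicts {u,v}) \<le> card (conflicts {u,v}) - card G"
    by (rule card_image_le_card_Diff[OF finite_conflicts assms(2,3)])
  moreover have "card G \<le> card (conflicts {u,v})"
    using card_mono[OF finite_conflicts assms(2)] .
  ultimately show ?thesis using card_conflicts_links[OF assms(1)] by linarith
qed

section \<open>Connected components\<close>

definition adj :: "'a rel" where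
  "adj = {(x,y). {x,y} \<in> E}"

definition component :: "'a \<Rightarrow> 'a set" where
  "component r = {v. (r,v) \<in> adj\<^sup>*}"

lemma sym_adj: "sym adj"
  by (auto simp: sym_def adj_def insert_commute)

lemma component_closed: "v \<in> component r \<Longrightarrow> {v,w} \<in> E \<Longrightarrow> w \<in> component r"
  unfolding component_def adj_def by (auto intro: rtrancl_into_rtrancl)

lemma self_in_component: "r \<in> component r"
  by (simp add: component_def)

lemma component_subset_V:
  assumes "r \<in> V"
  shows "component r \<subseteq> V"
proof
  fix v assume "v \<in> component r"
  then have "(r,v) \<in> adj\<^sup>*" by (simp add: component_def)
  then show "v \<in> V"
    by (induction rule: rtrancl_induct) (use assms adj_in_V in \<open>auto simp: adj_def\<close>)
qed

lemma finite_component: "r \<in> V \<Longrightarrow> finite (component r)"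
  using component_subset_V finite_V finite_subset by blast

lemma component_connected:
  assumes "x \<in> component r" "y \<in> component r"
  shows "(x,y) \<in> adj\<^sup>*"
proof -
  have "(x,r) \<in> adj\<^sup>*"
    using assms(1) sym_adj by (simp add: component_def sym_rtrancl symD)
  then show ?thesis using assms(2) by (simp add: component_def)
qed

lemma component_eq:
  assumes "x \<in> component r"
  shows "component x = component r"
proof (intro set_eqI iffI)
  have rx: "(r,x) \<in> adj\<^sup>*" and xr: "(x,r) \<in> adj\<^sup>*"
    using assms component_connected[OF assms self_in_component] by (auto simp: component_def)
  fix v
  show "v \<in> component r" if "v \<in> component x"
    using rtrancl_trans[OF rx] that by (simp add: component_def)
  show "v \<in> component x" if "v \<in> component r"
    using rtrancl_trans[OF xr] that by (simp add: component_def)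
qed

lemma component_eq_if_adj: "{x,y} \<in> E \<Longrightarrow> component x = component y"
  using component_eq[OF component_closed[OF self_in_component]] by simp

lemma component_eq_if_in_edge:
  assumes "e \<in> E" "x \<in> e" "y \<in> e"
  shows "component x = component y"
proof -
  obtain a b where ab: "e = {a,b}" using assms(1) by (rule edgeE)
  then have "component a = component b" using component_eq_if_adj assms(1) by simp
  then show ?thesis using assms(2,3) ab by auto
qed

lemma edge_within_component:
  assumes "e \<in> E" "x \<in> e"
  shows "e \<in> edges_within (component x)"
proof -
  have "y \<in> component x" if "y \<in> e" for y
    using self_in_component[of y] component_eq_if_in_edge[OF assms that] by simp
  then show ?thesis using assms(1) by (auto simp: edges_within_def)
qed

lemma component_eq_if_conflict:
  assumes "e \<in> E" "f \<in> E" "conflict e f" "x \<in> e" "y \<in> f"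
  shows "component x = component y"
proof -
  obtain x' y' where "x' \<in> e" "y' \<in> f" "y' = x' \<or> {x',y'} \<in> E"
    using conflict_near[OF assms(3)] by blast
  then have "component x' = component y'" using component_eq_if_adj by auto
  then show ?thesis
    using component_eq_if_in_edge[OF assms(1,4) \<open>x' \<in> e\<close>] component_eq_if_in_edge[OF assms(2,5) \<open>y' \<in> f\<close>]
    by simp
qed

lemma strongly_colourable_if_components:
  assumes "\<And>r. r \<in> V \<Longrightarrow> strongly_colourable k (component r)"
  shows "strongly_colourable k V"
proof -
  have "\<forall>K\<in>component ` V. \<exists>c. strong_colouring k K c"
    using assms by (auto simp: strongly_colourable_def)
  then obtain col where "\<forall>K\<in>component ` V. strong_colouring k K (col K)"
    by (blast dest: bchoice)
  then have col: "strong_colouring k (component r) (col (component r))" if "r \<in> V" for r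
    using that by blast
  define pick where "pick e = (SOME x. x \<in> e)" for e :: "'a set"
  have pick: "pick e \<in> e" if "e \<in> E" for e
  proof -
    have "\<exists>x. x \<in> e" using that no_empty_edge by (subst ex_in_conv) auto
    then show ?thesis unfolding pick_def by (rule someI_ex)
  qed
  have pick_V: "pick e \<in> V" if "e \<in> E" for e
    using pick[OF that] that simple by (auto simp: simple_graph_def)
  have within: "e \<in> edges_within (component (pick e))" if "e \<in> E" for e
    using edge_within_component[OF that pick[OF that]] .
  show ?thesis
    unfolding strongly_colourable_def strong_colouring_def
  proof (intro exI[of _ "\<lambda>e. col (component (pick e)) e"] conjI ballI impI)
    fix e assume "e \<in> edges_within V"
    then have "e \<in> E" by (simp add: edges_within_def)
    then show "col (component (pick e)) e < k"
      using col[OF pick_V] within by (simp add: strong_colouring_def)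
  next
    fix e f assume ef: "e \<in> edges_within V" "f \<in> edges_within V" "conflict e f"
    then have in_E: "e \<in> E" "f \<in> E" by (auto simp: edges_within_def)
    have "component (pick f) = component (pick e)"
      using component_eq_if_conflict[OF in_E ef(3) pick pick] in_E by simp
    then show "col (component (pick e)) e \<noteq> col (component (pick f)) f"
      using col[OF pick_V[OF in_E(1)]] within[OF in_E(1)] within[OF in_E(2)] ef(3)
      by (simp add: strong_colouring_def)
  qed
qed

end

section \<open>Greedy colouring of a rooted component\<close>

text \<open>The order of the greedy colouring: first the edges of \<open>P\<close>, where \<open>rep\<close> merges pairwise
  non-conflicting edges of \<open>P\<close> into one colour class; then the remaining edges by decreasing
  distance from the root set \<open>R\<close>; finally the root edges \<open>f4, f3, f2, f1\<close>. The savings bound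
  the number of colour classes met by the conflicts of the root edges.\<close>

locale rooted_component = quartic_triangle_free +
  fixes r :: 'a and R :: "'a set" and f1 f2 f3 f4 :: "'a set"
    and P :: "'a set set" and rep :: "'a set \<Rightarrow> 'a set"
  assumes r_in_V: "r \<in> V"
    and roots_in_component: "R \<subseteq> component r" and roots_nonempty: "R \<noteq> {}"
    and root_edges: "f \<in> {f1,f2,f3,f4} \<Longrightarrow> f \<in> E \<and> f \<inter> R \<noteq> {}"
    and root_edges_distinct: "distinct [f1,f2,f3,f4]"
    and root_edges_conflict: "e \<in> {f1,f2,f3,f4} \<Longrightarrow> f \<in> {f1,f2,f3,f4} \<Longrightarrow> e \<noteq> f \<Longrightarrow> conflict e f"
    and near_roots_conflict:
      "e \<in> E \<Longrightarrow> e \<inter> R \<noteq> {} \<Longrightarrow> e \<notin> {f1,f2,f3,f4} \<Longrightarrow> f \<in> {f1,f2,f3,f4} \<Longrightarrow> conflict e f"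
    and P_edges: "P \<subseteq> E" and card_P: "card P \<le> 22" and P_disjoint: "pairwise disjnt P"
    and P_not_root: "P \<inter> {f1,f2,f3,f4} = {}"
    and rep_outside: "e \<notin> P \<Longrightarrow> rep e = e"
    and rep_inside: "e \<in> P \<Longrightarrow> rep e \<in> P"
    and rep_independent: "e \<in> P \<Longrightarrow> f \<in> P \<Longrightarrow> rep e = rep f \<Longrightarrow> \<not> conflict e f"
    and savings: "card (rep ` conflicts f1) \<le> 21" "card (rep ` conflicts f2) \<le> 22"
      "card (rep ` conflicts f3) \<le> 23"
begin

definition level :: "'a \<Rightarrow> nat" where
  "level v = (LEAST n. \<exists>\<rho>\<in>R. (\<rho>,v) \<in> adj ^^ n)"

definition edge_level :: "'a set \<Rightarrow> nat" where
  "edge_level e = Min (level ` e)"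

definition top_level :: nat where
  "top_level = Max (level ` component r)"

definition rank :: "'a set \<Rightarrow> nat" where
  "rank e = (if e \<in> P then 0
     else if e = f1 then top_level + 5 else if e = f2 then top_level + 4
     else if e = f3 then top_level + 3 else if e = f4 then top_level + 2
     else Suc top_level - edge_level e)"

definition earlier_classes :: "'a set \<Rightarrow> 'a set set" where
  "earlier_classes e = {y \<in> rep ` conflicts e. rank y \<le> rank e}"

lemma level_reached:
  assumes "v \<in> component r"
  shows "\<exists>\<rho>\<in>R. (\<rho>,v) \<in> adj ^^ level v"
proof -
  obtain \<rho> where "\<rho> \<in> R" using roots_nonempty by blast
  then have "(\<rho>,v) \<in> adj\<^sup>*"
    using component_connected roots_in_component assms by blast
  then have "\<exists>n. \<exists>\<rho>\<in>R. (\<rho>,v) \<in> adj ^^ n"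
    using \<open>\<rho> \<in> R\<close> by (auto simp: rtrancl_power)
  then show ?thesis unfolding level_def by (rule LeastI_ex)
qed

lemma level_descent:
  assumes "v \<in> component r" "0 < level v"
  obtains u where "{u,v} \<in> E" "level u < level v"
proof -
  obtain m where m: "level v = Suc m" using assms(2) gr0_implies_Suc by blast
  obtain \<rho> u where "\<rho> \<in> R" "(\<rho>,u) \<in> adj ^^ m" "(u,v) \<in> adj"
    using level_reached[OF assms(1)] m by auto
  moreover have "level u \<le> m"
    using calculation unfolding level_def by (auto intro: Least_le)
  ultimately show ?thesis using that m by (simp add: adj_def)
qed

lemma level_zero: "v \<in> component r \<Longrightarrow> level v = 0 \<Longrightarrow> v \<in> R"
  using level_reached by fastforce

lemma edge_level_le: "e \<in> E \<Longrightarrow> x \<in> e \<Longrightarrow> edge_level e \<le> level x"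
  by (auto simp: edge_level_def elim: edgeE)

lemma edge_level_attained:
  assumes "e \<in> E"
  obtains x where "x \<in> e" "level x = edge_level e"
proof -
  have "finite e" "e \<noteq> {}" using assms by (auto elim: edgeE)
  then have "Min (level ` e) \<in> level ` e" by simp
  then show ?thesis using that by (auto simp: edge_level_def)
qed

lemma edge_level_le_top_level:
  assumes "e \<in> edges_within (component r)"
  shows "edge_level e \<le> top_level"
proof -
  have "e \<in> E" using assms by (simp add: edges_within_def)
  then obtain x where "x \<in> e" "level x = edge_level e" by (rule edge_level_attained)
  then have "x \<in> component r" using assms by (auto simp: edges_within_def)
  then have "level x \<le> Max (level ` component r)"
    using finite_component[OF r_in_V] by simp
  then show ?thesis using \<open>level x = edge_level e\<close> by (simp add: top_level_def)
qed

lemma root_edges_not_P: "f1 \<notin> P" "f2 \<notin> P" "f3 \<notin> P" "f4 \<notin> P"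
  using P_not_root by auto

lemma rank_ordinary:
  "e \<notin> P \<Longrightarrow> e \<notin> {f1,f2,f3,f4} \<Longrightarrow> rank e = Suc top_level - edge_level e"
  by (simp add: rank_def)

lemma rank_root_edges:
  "rank f1 = top_level + 5" "rank f2 = top_level + 4" "rank f3 = top_level + 3" "rank f4 = top_level + 2"
  using root_edges_not_P root_edges_distinct by (auto simp: rank_def)

lemma rank_positive:
  assumes "e \<in> edges_within (component r)" "e \<notin> P"
  shows "0 < rank e"
  using edge_level_le_top_level[OF assms(1)] assms(2) by (simp add: rank_def)

lemma card_rep_conflicts_le:
  assumes "e \<in> E"
  shows "card (rep ` conflicts e) \<le> 24"
proof -
  obtain u v where "e = {u,v}" using assms by (rule edgeE)
  then have "card (conflicts e) \<le> 24" using card_conflicts_links assms by fastforce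
  then show ?thesis using card_image_le[OF finite_conflicts] le_trans by blast
qed

lemma card_earlier_if_later:
  assumes "Z \<subseteq> conflicts e - P" "\<And>z. z \<in> Z \<Longrightarrow> rank e < rank z"
    and "card (rep ` conflicts e) \<le> 21 + card Z"
  shows "card (earlier_classes e) \<le> 21"
  unfolding earlier_classes_def
proof (rule card_filter_le_if_excluded)
  show "Z \<subseteq> rep ` conflicts e"
    using assms(1) rep_outside by (auto intro: rev_image_eqI)
qed (use assms finite_conflicts in \<open>auto simp: not_le\<close>)

lemma card_earlier_root_edge:
  assumes "e \<in> {f1,f2,f3,f4}"
  shows "card (earlier_classes e) \<le> 21"
proof -
  have conf: "f \<in> conflicts e" if "f \<in> {f1,f2,f3,f4}" "f \<noteq> e" for f
    using root_edges_conflict[OF assms that(1)] root_edges[OF that(1)] that(2) by (auto simp: conflicts_def)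
  have in_E: "e \<in> E" using root_edges[OF assms] by simp
  have d: "f1 \<noteq> f2" "f1 \<noteq> f3" "f1 \<noteq> f4" "f2 \<noteq> f3" "f2 \<noteq> f4" "f3 \<noteq> f4"
    using root_edges_distinct by auto
  from assms consider "e = f1" | "e = f2" | "e = f3" | "e = f4" by blast
  then show ?thesis
  proof cases
    case 1
    show ?thesis
      by (rule card_earlier_if_later[of "{}"]) (use savings(1) 1 in simp_all)
  next
    case 2
    show ?thesis
    proof (rule card_earlier_if_later[of "{f1}"])
      show "{f1} \<subseteq> conflicts e - P" using conf[of f1] root_edges_not_P d 2 by simp
    qed (use savings(2) rank_root_edges 2 in simp_all)
  next
    case 3
    show ?thesis
    proof (rule card_earlier_if_later[of "{f1,f2}"])
      show "{f1,f2} \<subseteq> conflicts e - P" using conf[of f1] conf[of f2] root_edges_not_P d 3 by simp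
    qed (use savings(3) rank_root_edges d 3 in auto)
  next
    case 4
    show ?thesis
    proof (rule card_earlier_if_later[of "{f1,f2,f3}"])
      show "{f1,f2,f3} \<subseteq> conflicts e - P"
        using conf[of f1] conf[of f2] conf[of f3] root_edges_not_P d 4 by simp
    qed (use card_rep_conflicts_le[OF in_E] rank_root_edges d 4 in auto)
  qed
qed

lemma card_earlier_near_roots:
  assumes "e \<in> edges_within (component r)" "e \<notin> P" "e \<notin> {f1,f2,f3,f4}" "edge_level e = 0"
  shows "card (earlier_classes e) \<le> 21"
proof (rule card_earlier_if_later)
  have in_E: "e \<in> E" using assms(1) by (simp add: edges_within_def)
  then obtain x where x: "x \<in> e" "level x = edge_level e" by (rule edge_level_attained)
  then have "x \<in> R" using assms(1,4) level_zero by (auto simp: edges_within_def)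
  then have "conflict e f" if "f \<in> {f1,f2,f3,f4}" for f
    using near_roots_conflict[OF in_E _ assms(3) that] x(1) by blast
  then show "{f1,f2,f3,f4} \<subseteq> conflicts e - P"
    using root_edges root_edges_not_P unfolding conflicts_def by blast
  have "rank e = Suc top_level" using rank_ordinary[OF assms(2,3)] assms(4) by simp
  then show "rank e < rank z" if "z \<in> {f1,f2,f3,f4}" for z
    using that rank_root_edges by auto
  show "card (rep ` conflicts e) \<le> 21 + card {f1,f2,f3,f4}"
    using card_rep_conflicts_le[OF in_E] root_edges_distinct by simp
qed

lemma card_earlier_far_from_roots:
  assumes "e \<in> edges_within (component r)" "e \<notin> P" "e \<notin> {f1,f2,f3,f4}" "edge_level e > 0"
  shows "card (earlier_classes e) \<le> 21"
proof -
  have in_E: "e \<in> E" using assms(1) by (simp add: edges_within_def)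
  obtain a where a: "a \<in> e" "level a = edge_level e" using in_E by (rule edge_level_attained)
  obtain b where e: "e = {a,b}" using in_E a(1) by (rule edge_at)
  have "a \<in> component r" using assms(1) a(1) by (auto simp: edges_within_def)
  then obtain u where u: "{u,a} \<in> E" "level u < level a" using level_descent assms(4) a(2) by metis
  have "u \<noteq> b" using u edge_level_le[OF in_E, of b] a e by auto
  have u_V: "u \<in> V" using u(1) adj_in_V by blast
  have rank_e: "rank e = Suc top_level - edge_level e" using rank_ordinary[OF assms(2,3)] .
  have top: "edge_level e \<le> top_level" using edge_level_le_top_level[OF assms(1)] .
  show ?thesis
  proof (rule card_earlier_if_later)
    show "incident u - P \<subseteq> conflicts e - P"
      using conflicts_incident in_E e u(1) \<open>u \<noteq> b\<close> by blast
    show "rank e < rank z" if "z \<in> incident u - P" for z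
    proof (cases "z \<in> {f1,f2,f3,f4}")
      case True
      then show ?thesis using rank_e rank_root_edges by auto
    next
      case False
      have "z \<in> E" "u \<in> z" using that by (auto simp: incident_def)
      then have "edge_level z < edge_level e" using edge_level_le u(2) a(2) by fastforce
      then show ?thesis using rank_e top rank_ordinary[OF _ False] that by simp
    qed
    have "\<forall>g\<in>incident u \<inter> P. \<forall>h\<in>incident u \<inter> P. g = h"
      using P_disjoint unfolding incident_def pairwise_def disjnt_def by blast
    then have "card (incident u \<inter> P) \<le> 1"
      using card_le_Suc0_iff_eq[of "incident u \<inter> P"] finite_incident by simp
    then have "3 \<le> card (incident u - P)"
      using card_incident[OF u_V] card_Diff_subset_Int[of "incident u" P] finite_incident by simp
    then show "card (rep ` conflicts e) \<le> 21 + card (incident u - P)"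
      using card_rep_conflicts_le[OF in_E] by simp
  qed
qed

lemma card_earlier_conflicts:
  assumes "e \<in> edges_within (component r)" "e \<notin> P"
  shows "card (earlier_classes e) \<le> 21"
  using card_earlier_root_edge card_earlier_near_roots[OF assms] card_earlier_far_from_roots[OF assms]
  by blast

theorem colourable: "strongly_colourable 22 (component r)"
proof -
  let ?S = "edges_within (component r)"
  have "\<exists>col. (\<forall>e\<in>?S. col e \<le> (21::nat)) \<and> (\<forall>e\<in>?S. \<forall>f\<in>?S. conflict e f \<longrightarrow> col e \<noteq> col f)"
  proof (rule greedy_colouring_quotient[where q = rep and rank = rank])
    show "finite ?S" using finite_E by (simp add: edges_within_def)
    show "rep e \<noteq> rep f" if "e \<in> ?S" "f \<in> ?S" "conflict e f" for e f
    proof (cases "e \<in> P")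
      case True
      then show ?thesis using that rep_independent rep_inside rep_outside by (cases "f \<in> P") auto
    next
      case False
      then show ?thesis using that rep_inside rep_outside not_conflict_self by (cases "f \<in> P") auto
    qed
    fix x assume "x \<in> rep ` ?S"
    let ?earlier = "{y \<in> rep ` ?S. (\<exists>e\<in>?S. \<exists>f\<in>?S. rep e = x \<and> rep f = y \<and> conflict e f) \<and>
      y \<noteq> x \<and> rank y \<le> rank x}"
    show "card ?earlier \<le> 21"
    proof (cases "x \<in> P")
      case True
      have "?earlier \<subseteq> P - {x}"
      proof
        fix y assume y: "y \<in> ?earlier"
        then obtain f where f: "f \<in> ?S" "y = rep f" by blast
        have "rank y = 0" using y True by (simp add: rank_def)
        then have "f \<in> P" using f rank_positive rep_outside by fastforce
        then show "y \<in> P - {x}" using f y rep_inside by blast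
      qed
      moreover have "finite P" using P_edges finite_E finite_subset by blast
      ultimately have "card ?earlier \<le> card (P - {x})" by (intro card_mono) auto
      then show ?thesis using card_P True \<open>finite P\<close> by (simp add: card_Diff_singleton)
    next
      case False
      obtain e0 where "e0 \<in> ?S" "x = rep e0" using \<open>x \<in> rep ` ?S\<close> by blast
      then have x: "x \<in> ?S" using False rep_inside rep_outside by metis
      have "?earlier \<subseteq> earlier_classes x"
      proof
        fix y assume "y \<in> ?earlier"
        then obtain e f where ef: "e \<in> ?S" "f \<in> ?S" "rep e = x" "rep f = y" "conflict e f"
          and "rank y \<le> rank x" by blast
        have "e = x" using ef(3) False rep_inside rep_outside by metis
        then have "f \<in> conflicts x" using ef by (simp add: conflicts_def edges_within_def)
        then show "y \<in> earlier_classes x"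
          using ef(4) \<open>rank y \<le> rank x\<close> unfolding earlier_classes_def by blast
      qed
      then have "card ?earlier \<le> card (earlier_classes x)"
        using finite_conflicts by (intro card_mono) (auto simp: earlier_classes_def)
      then show ?thesis using card_earlier_conflicts[OF x False] by simp
    qed
  qed (rule symp_conflict)
  then obtain col :: "'a set \<Rightarrow> nat" where "\<forall>e\<in>?S. col e \<le> 21" "\<forall>e\<in>?S. \<forall>f\<in>?S. conflict e f \<longrightarrow> col e \<noteq> col f"
    by blast
  then show ?thesis
    unfolding strongly_colourable_def strong_colouring_def by (intro exI[of _ col]) auto
qed

end

context quartic_triangle_free
begin

section \<open>Components containing a 4-cycle\<close>

definition four_cycle :: "'a \<Rightarrow> 'a \<Rightarrow> 'a \<Rightarrow> 'a \<Rightarrow> bool" where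
  "four_cycle a b c d \<longleftrightarrow> {a,b} \<in> E \<and> {b,c} \<in> E \<and> {c,d} \<in> E \<and> {d,a} \<in> E \<and> a \<noteq> c \<and> b \<noteq> d"

definition common_conflicts :: "'a \<Rightarrow> 'a \<Rightarrow> 'a \<Rightarrow> 'a \<Rightarrow> 'a set set" where
  "common_conflicts a b c d = conflicts {a,b} \<inter> conflicts {b,c} \<inter> conflicts {c,d} \<inter> conflicts {d,a}"

lemma four_cycleD:
  assumes "four_cycle a b c d"
  shows "{a,b} \<in> E" "{b,c} \<in> E" "{c,d} \<in> E" "{d,a} \<in> E" "a \<noteq> c" "b \<noteq> d"
  using assms by (simp_all add: four_cycle_def)

lemma four_cycle_rotate: "four_cycle a b c d \<Longrightarrow> four_cycle b c d a"
  by (auto simp: four_cycle_def insert_commute)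

lemma four_cycle_distinct: "four_cycle a b c d \<Longrightarrow> distinct [a,b,c,d]"
  using adj_distinct by (auto simp: four_cycle_def insert_commute)

lemma four_cycle_no_diagonal:
  assumes "four_cycle a b c d"
  shows "{a,c} \<notin> E" "{b,d} \<notin> E"
proof -
  note cyc = four_cycleD[OF assms]
  show "{a,c} \<notin> E" using triangle_free[of a b c] cyc by blast
  have "{b,a} \<in> E" "{a,d} \<in> E" using cyc by (simp_all add: insert_commute)
  then show "{b,d} \<notin> E" using triangle_free[of b a d] by blast
qed

lemma component_four_cycle: "four_cycle a b c d \<Longrightarrow> component b = component a"
  using component_eq_if_adj four_cycleD(1) by metis

lemma common_conflicts_rotate: "common_conflicts b c d a = common_conflicts a b c d"
  by (auto simp: common_conflicts_def)

lemma common_conflicts_edges: "common_conflicts a b c d \<subseteq> E"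
  by (auto simp: common_conflicts_def conflicts_def)

lemma links_opposite:
  assumes "four_cycle a b c d"
  shows "{d,c} \<in> links a b"
  using linksI[of d c a b] four_cycleD[OF assms] by (simp add: insert_commute)

lemma card_links_pos:
  assumes "four_cycle a b c d"
  shows "1 \<le> card (links a b)"
  using links_opposite[OF assms] finite_links[of a b] by (auto simp: Suc_le_eq card_gt_0_iff)

lemma pendant_common_conflicts_at:
  assumes "four_cycle a b c d" "{a,y} \<in> E" "y \<noteq> b" "y \<noteq> d"
  shows "{a,y} \<in> common_conflicts a b c d"
proof -
  note cyc = four_cycleD[OF assms(1)]
  have "y \<noteq> c" using four_cycle_no_diagonal(1)[OF assms(1)] assms(2) by auto
  then have d: "distinct [y,a,b,c]" "distinct [y,a,d,c]"
    using four_cycle_distinct[OF assms(1)] adj_distinct[OF assms(2)] assms(3,4) by auto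
  have "{y,a} \<in> conflicts {b,c}"
    by (rule conflicts_path3(2)[OF d(1)]) (use cyc assms(2) in \<open>simp_all add: insert_commute\<close>)
  moreover have "{y,a} \<in> conflicts {d,c}"
    by (rule conflicts_path3(2)[OF d(2)]) (use cyc assms(2) in \<open>simp_all add: insert_commute\<close>)
  moreover have "{a,b} \<noteq> {a,y}" "{d,a} \<noteq> {a,y}" using assms(3,4) by (auto simp: doubleton_eq_iff)
  then have "{a,y} \<in> conflicts {a,b}" "{a,y} \<in> conflicts {d,a}"
    using assms(2) conflict_if_share[of "{a,b}" "{a,y}" a] conflict_if_share[of "{d,a}" "{a,y}" a]
    by (simp_all add: conflicts_def)
  ultimately show ?thesis by (simp add: common_conflicts_def insert_commute)
qed

lemma pendant_common_conflicts:
  assumes "four_cycle a b c d"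
  shows "{a,y} \<in> E \<Longrightarrow> y \<noteq> b \<Longrightarrow> y \<noteq> d \<Longrightarrow> {a,y} \<in> common_conflicts a b c d"
    and "{b,y} \<in> E \<Longrightarrow> y \<noteq> c \<Longrightarrow> y \<noteq> a \<Longrightarrow> {b,y} \<in> common_conflicts a b c d"
    and "{c,y} \<in> E \<Longrightarrow> y \<noteq> d \<Longrightarrow> y \<noteq> b \<Longrightarrow> {c,y} \<in> common_conflicts a b c d"
    and "{d,y} \<in> E \<Longrightarrow> y \<noteq> a \<Longrightarrow> y \<noteq> c \<Longrightarrow> {d,y} \<in> common_conflicts a b c d"
proof -
  have cyc2: "four_cycle b c d a" and cyc3: "four_cycle c d a b" and cyc4: "four_cycle d a b c"
    using assms four_cycle_rotate by blast+
  have cc: "common_conflicts b c d a = common_conflicts a b c d"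
    "common_conflicts c d a b = common_conflicts a b c d"
    "common_conflicts d a b c = common_conflicts a b c d"
    using common_conflicts_rotate by metis+
  show "{a,y} \<in> E \<Longrightarrow> y \<noteq> b \<Longrightarrow> y \<noteq> d \<Longrightarrow> {a,y} \<in> common_conflicts a b c d"
    using pendant_common_conflicts_at[OF assms] by blast
  show "{b,y} \<in> E \<Longrightarrow> y \<noteq> c \<Longrightarrow> y \<noteq> a \<Longrightarrow> {b,y} \<in> common_conflicts a b c d"
    using pendant_common_conflicts_at[OF cyc2] cc(1) by blast
  show "{c,y} \<in> E \<Longrightarrow> y \<noteq> d \<Longrightarrow> y \<noteq> b \<Longrightarrow> {c,y} \<in> common_conflicts a b c d"
    using pendant_common_conflicts_at[OF cyc3] cc(2) by blast
  show "{d,y} \<in> E \<Longrightarrow> y \<noteq> a \<Longrightarrow> y \<noteq> c \<Longrightarrow> {d,y} \<in> common_conflicts a b c d"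
    using pendant_common_conflicts_at[OF cyc4] cc(3) by blast
qed

lemma cross_common_conflicts:
  assumes "four_cycle a b c d" "{b,s} \<in> E" "{d,t} \<in> E" "{s,t} \<in> E" "s \<notin> {a,c}" "t \<notin> {a,c}"
  shows "{s,t} \<in> common_conflicts a b c d"
proof -
  note cyc = four_cycleD[OF assms(1)]
  have "s \<noteq> d" using four_cycle_no_diagonal(2)[OF assms(1)] assms(2) by auto
  moreover have "t \<noteq> b" using four_cycle_no_diagonal(2)[OF assms(1)] assms(3) by (auto simp: insert_commute)
  moreover have "s \<noteq> b" "t \<noteq> d" "s \<noteq> t" using adj_distinct assms(2-4) by blast+
  ultimately have d: "distinct [a,b,s,t]" "distinct [c,b,s,t]" "distinct [c,d,t,s]" "distinct [a,d,t,s]"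
    using four_cycle_distinct[OF assms(1)] assms(5,6) by auto
  have "{s,t} \<in> conflicts {a,b}" "{s,t} \<in> conflicts {c,b}" "{t,s} \<in> conflicts {c,d}" "{t,s} \<in> conflicts {a,d}"
    using conflicts_path3(1)[OF d(1)] conflicts_path3(1)[OF d(2)] conflicts_path3(1)[OF d(3)]
      conflicts_path3(1)[OF d(4)] cyc assms(2-4) by (simp_all add: insert_commute)
  then show ?thesis by (simp add: common_conflicts_def insert_commute)
qed

lemma opposite_pendants_not_conflict:
  assumes "four_cycle a b c d" "{a,p} \<in> E" "{c,p} \<notin> E" "{c,q} \<in> E" "{a,q} \<notin> E" "{p,q} \<notin> E"
  shows "\<not> conflict {a,p} {c,q}"
proof -
  note no_diag = four_cycle_no_diagonal(1)[OF assms(1)]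
  have "a \<noteq> q" "p \<noteq> c" using assms(2,4) no_diag by (auto simp: insert_commute)
  moreover have "p \<noteq> q" using assms(3,4) by auto
  moreover have "a \<noteq> p" "c \<noteq> q" using adj_distinct assms(2,4) by blast+
  ultimately show ?thesis
    using not_conflict_far_edges[of a p c q] four_cycleD(5)[OF assms(1)] no_diag assms(3,5,6)
    by (auto simp: insert_commute)
qed

lemma pendant_cross_not_conflict:
  assumes "four_cycle a b c d" "{a,p} \<in> E" "{b,s} \<in> E" "{d,t} \<in> E" "{s,t} \<in> E" "s \<noteq> a" "t \<noteq> a"
    and "{p,s} \<notin> E" "{p,t} \<notin> E"
  shows "\<not> conflict {a,p} {s,t}"
proof -
  note cyc = four_cycleD[OF assms(1)]
  have "p \<noteq> s" using triangle_free[of a b p] cyc assms(2,3) by auto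
  moreover have "p \<noteq> t" using triangle_free[of a d p] cyc assms(2,4) by (auto simp: insert_commute)
  moreover have "{a,s} \<notin> E" using triangle_free[of a b s] cyc assms(3) by auto
  moreover have "{a,t} \<notin> E" using triangle_free[of a d t] cyc assms(4) by (auto simp: insert_commute)
  ultimately show ?thesis
    using not_conflict_far_edges[of a p s t] assms(6-9) adj_distinct[OF assms(2)] adj_distinct[OF \<open>{s,t} \<in> E\<close>]
    by (auto simp: insert_commute)
qed

lemma cycle_root_colourable:
  assumes cyc: "four_cycle a b c d"
    and P: "P \<subseteq> common_conflicts a b c d" "card P \<le> 22" "pairwise disjnt P"
    and rep: "\<And>e. e \<notin> P \<Longrightarrow> rep e = e" "\<And>e. e \<in> P \<Longrightarrow> rep e \<in> P"
      "\<And>e f. e \<in> P \<Longrightarrow> f \<in> P \<Longrightarrow> rep e = rep f \<Longrightarrow> \<not> conflict e f"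
    and G: "G \<subseteq> P" "\<And>g. g \<in> G \<Longrightarrow> \<exists>h\<in>P - G. rep g = rep h"
    and savings: "3 \<le> card G + card (links a b)" "2 \<le> card G + card (links b c)"
      "2 \<le> card G + card (links c d)"
  shows "strongly_colourable 22 (component a)"
proof -
  note cy = four_cycleD[OF cyc]
  have dist: "distinct [a,b,c,d]" using four_cycle_distinct[OF cyc] .
  have in_cc: "P \<subseteq> conflicts f" if "f \<in> {{a,b},{b,c},{c,d},{d,a}}" for f
    using that P(1) by (auto simp: common_conflicts_def)
  have bound: "card (rep ` conflicts {u,v}) + card G + card (links u v) \<le> 24"
    if "{u,v} \<in> {{a,b},{b,c},{c,d},{d,a}}" "{u,v} \<in> E" for u v
  proof (rule card_rep_conflicts_savings[OF that(2)])
    show "G \<subseteq> conflicts {u,v}" using G(1) in_cc[OF that(1)] by blast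
    fix g assume "g \<in> G"
    then obtain h where "h \<in> P - G" "rep g = rep h" using G(2) by blast
    then show "\<exists>h\<in>conflicts {u,v} - G. rep g = rep h" using in_cc[OF that(1)] by blast
  qed
  have "rooted_component V E a {a,b,c,d} {a,b} {b,c} {c,d} {d,a} P rep"
  proof (intro rooted_component.intro[OF quartic_triangle_free_axioms] rooted_component_axioms.intro)
    show "a \<in> V" using adj_in_V cy(1) by blast
    have "b \<in> component a" using component_closed[OF self_in_component cy(1)] .
    moreover have "c \<in> component a" using component_closed[OF \<open>b \<in> component a\<close> cy(2)] .
    moreover have "d \<in> component a" using component_closed[OF \<open>c \<in> component a\<close> cy(3)] .
    ultimately show "{a,b,c,d} \<subseteq> component a" using self_in_component by auto
    show "{a,b,c,d} \<noteq> {}" by simp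
    show "f \<in> E \<and> f \<inter> {a,b,c,d} \<noteq> {}" if "f \<in> {{a,b},{b,c},{c,d},{d,a}}" for f
      using that cy by auto
    show "distinct [{a,b},{b,c},{c,d},{d,a}]" using dist by (auto simp: doubleton_eq_iff)
    show "conflict e f"
      if "e \<in> {{a,b},{b,c},{c,d},{d,a}}" "f \<in> {{a,b},{b,c},{c,d},{d,a}}" "e \<noteq> f" for e f
    proof -
      have "conflict {a,b} {c,d}" "conflict {b,c} {d,a}"
        using conflict_path3[of a b c d] conflict_path3[of b c d a] cy dist by auto
      then show ?thesis using that conflict_sym by (auto intro: conflict_if_share)
    qed
    show "conflict e f" if e: "e \<in> E" "e \<inter> {a,b,c,d} \<noteq> {}" "e \<notin> {{a,b},{b,c},{c,d},{d,a}}"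
      and f: "f \<in> {{a,b},{b,c},{c,d},{d,a}}" for e f
    proof -
      obtain x where x: "x \<in> e" "x \<in> {a,b,c,d}" using e(2) by blast
      then obtain y where xy: "e = {x,y}" using e(1) by (meson edge_at)
      have "e \<in> common_conflicts a b c d"
        using x(2) pendant_common_conflicts[OF cyc, of y] e(1,3) xy by (auto simp: insert_commute)
      then show ?thesis using f conflict_sym by (auto simp: common_conflicts_def conflicts_def)
    qed
    show "P \<subseteq> E" using P(1) common_conflicts_edges by blast
    show "P \<inter> {{a,b},{b,c},{c,d},{d,a}} = {}"
      using in_cc conflicts_not_self by blast
    show "card (rep ` conflicts {a,b}) \<le> 21" using bound[of a b] savings(1) cy by simp
    show "card (rep ` conflicts {b,c}) \<le> 22" using bound[of b c] savings(2) cy by simp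
    show "card (rep ` conflicts {c,d}) \<le> 23" using bound[of c d] savings(3) cy by simp
  qed (use P rep in auto)
  then show ?thesis by (rule rooted_component.colourable)
qed

lemma cycle_root_colourable_links:
  assumes "four_cycle a b c d"
    and "3 \<le> card (links a b)" "2 \<le> card (links b c)" "2 \<le> card (links c d)"
  shows "strongly_colourable 22 (component a)"
  by (rule cycle_root_colourable[OF assms(1), where P = "{}" and rep = id and G = "{}"]) (use assms in auto)

lemma cycle_root_colourable_pair:
  assumes cyc: "four_cycle a b c d"
    and "g \<in> common_conflicts a b c d" "h \<in> common_conflicts a b c d" "g \<noteq> h" "\<not> conflict g h"
    and "2 \<le> card (links a b)"
  shows "strongly_colourable 22 (component a)"
proof (rule cycle_root_colourable[OF cyc, where P = "{g,h}" and G = "{h}"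
      and rep = "\<lambda>x. if x = h then g else x"])
  show "{g,h} \<subseteq> common_conflicts a b c d" using assms(2,3) by blast
  show "pairwise disjnt {g,h}"
    using disjoint_if_not_conflict assms(4,5) by (auto simp: pairwise_def disjnt_def Int_commute)
  show "\<not> conflict e f" if "e \<in> {g,h}" "f \<in> {g,h}"
    "(if e = h then g else e) = (if f = h then g else f)" for e f
    using that assms(5) conflict_sym not_conflict_self by (auto split: if_splits)
  have "1 \<le> card (links b c)" "1 \<le> card (links c d)"
    using card_links_pos four_cycle_rotate cyc by blast+
  then show "3 \<le> card {h} + card (links a b)" "2 \<le> card {h} + card (links b c)"
    "2 \<le> card {h} + card (links c d)" using assms(6) by simp_all
qed (use assms(4) in auto)

lemma cycle_root_colourable_two_pairs:
  assumes cyc: "four_cycle a b c d" and cc: "{g1,h1,g2,h2} \<subseteq> common_conflicts a b c d"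
    and "g1 \<noteq> h1" "\<not> conflict g1 h1" "g2 \<noteq> h2" "\<not> conflict g2 h2"
    and "(g1 \<union> h1) \<inter> (g2 \<union> h2) = {}"
  shows "strongly_colourable 22 (component a)"
proof (rule cycle_root_colourable[OF cyc cc, where G = "{h1,h2}"
      and rep = "\<lambda>x. if x \<in> {g1,h1} then g1 else if x \<in> {g2,h2} then g2 else x"])
  have ne: "g1 \<noteq> {}" "h1 \<noteq> {}" "g2 \<noteq> {}" "h2 \<noteq> {}"
    using cc common_conflicts_edges[of a b c d] no_empty_edge by auto
  have "g1 \<inter> g2 = {}" "g1 \<inter> h2 = {}" "h1 \<inter> g2 = {}" "h1 \<inter> h2 = {}"
    using assms(7) by auto
  then have dj: "g1 \<inter> h1 = {}" "g2 \<inter> h2 = {}" "g1 \<inter> g2 = {}" "g1 \<inter> h2 = {}" "h1 \<inter> g2 = {}" "h1 \<inter> h2 = {}"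
    using disjoint_if_not_conflict[OF assms(3,4)] disjoint_if_not_conflict[OF assms(5,6)] by simp_all
  have "x \<noteq> y" if "x \<inter> y = {}" "x \<noteq> {}" for x y :: "'a set" using that by auto
  then have d: "distinct [g1,h1,g2,h2]" using dj ne by simp
  show "pairwise disjnt {g1,h1,g2,h2}"
    unfolding pairwise_def disjnt_def using dj by (auto simp: Int_commute)
  show "card {g1,h1,g2,h2} \<le> 22" using d by simp
  show "\<not> conflict e f" if "e \<in> {g1,h1,g2,h2}" "f \<in> {g1,h1,g2,h2}"
    "(if e \<in> {g1,h1} then g1 else if e \<in> {g2,h2} then g2 else e) =
     (if f \<in> {g1,h1} then g1 else if f \<in> {g2,h2} then g2 else f)" for e f
  proof -
    have "(e \<in> {g1,h1} \<and> f \<in> {g1,h1}) \<or> (e \<in> {g2,h2} \<and> f \<in> {g2,h2})"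
      using that(1,2) d that(3) by (cases "e \<in> {g1,h1}"; cases "f \<in> {g1,h1}") auto
    then show ?thesis using assms(4,6) conflict_sym not_conflict_self by blast
  qed
  show "\<exists>h\<in>{g1,h1,g2,h2} - {h1,h2}.
      (if g \<in> {g1,h1} then g1 else if g \<in> {g2,h2} then g2 else g) =
      (if h \<in> {g1,h1} then g1 else if h \<in> {g2,h2} then g2 else h)" if "g \<in> {h1,h2}" for g
  proof (cases "g = h1")
    case True
    then show ?thesis using d by (intro bexI[of _ g1]) auto
  next
    case False
    then show ?thesis using that d by (intro bexI[of _ g2]) auto
  qed
  have "1 \<le> card (links a b)" "1 \<le> card (links b c)" "1 \<le> card (links c d)"
    using card_links_pos four_cycle_rotate cyc by blast+
  then show "3 \<le> card {h1,h2} + card (links a b)" "2 \<le> card {h1,h2} + card (links b c)"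
    "2 \<le> card {h1,h2} + card (links c d)" using d by simp_all
  show "(if e \<in> {g1,h1} then g1 else if e \<in> {g2,h2} then g2 else e) = e"
    if "e \<notin> {g1,h1,g2,h2}" for e using that by simp
  show "(if e \<in> {g1,h1} then g1 else if e \<in> {g2,h2} then g2 else e) \<in> {g1,h1,g2,h2}"
    if "e \<in> {g1,h1,g2,h2}" for e using that by auto
qed simp

lemma cycle_root_colourable_triple:
  assumes cyc: "four_cycle a b c d" and cc: "{g,h1,h2} \<subseteq> common_conflicts a b c d"
    and d: "distinct [g,h1,h2]" and "\<not> conflict g h1" "\<not> conflict g h2" "\<not> conflict h1 h2"
  shows "strongly_colourable 22 (component a)"
proof (rule cycle_root_colourable[OF cyc cc, where G = "{h1,h2}"
      and rep = "\<lambda>x. if x = h1 \<or> x = h2 then g else x"])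
  show "pairwise disjnt {g,h1,h2}"
    using disjoint_if_not_conflict assms(4-6) d by (auto simp: pairwise_def disjnt_def Int_commute)
  show "card {g,h1,h2} \<le> 22" using d by simp
  show "\<not> conflict e f" if "e \<in> {g,h1,h2}" "f \<in> {g,h1,h2}"
    "(if e = h1 \<or> e = h2 then g else e) = (if f = h1 \<or> f = h2 then g else f)" for e f
    using that assms(4-6) conflict_sym not_conflict_self by blast
  have "1 \<le> card (links a b)" "1 \<le> card (links b c)" "1 \<le> card (links c d)"
    using card_links_pos four_cycle_rotate cyc by blast+
  then show "3 \<le> card {h1,h2} + card (links a b)" "2 \<le> card {h1,h2} + card (links b c)"
    "2 \<le> card {h1,h2} + card (links c d)" using d by simp_all
qed (use d in auto)

lemma cycle_root_colourable_pair_rotated: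
  assumes cyc: "four_cycle a b c d"
    and "g \<in> common_conflicts a b c d" "h \<in> common_conflicts a b c d" "g \<noteq> h" "\<not> conflict g h"
    and "2 \<le> card (links a b) \<or> 2 \<le> card (links b c) \<or> 2 \<le> card (links c d) \<or> 2 \<le> card (links d a)"
  shows "strongly_colourable 22 (component a)"
proof -
  have cyc2: "four_cycle b c d a" and cyc3: "four_cycle c d a b" and cyc4: "four_cycle d a b c"
    using cyc four_cycle_rotate by blast+
  have cc: "common_conflicts b c d a = common_conflicts a b c d"
    "common_conflicts c d a b = common_conflicts a b c d"
    "common_conflicts d a b c = common_conflicts a b c d"
    using common_conflicts_rotate by metis+
  have comp: "component b = component a" "component c = component a" "component d = component a"
    using component_four_cycle[OF cyc] component_four_cycle[OF cyc2] component_four_cycle[OF cyc3]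
    by simp_all
  from assms(6) show ?thesis
  proof (elim disjE)
    assume "2 \<le> card (links a b)"
    then show ?thesis using cycle_root_colourable_pair[OF cyc assms(2-5)] by blast
  next
    assume "2 \<le> card (links b c)"
    then show ?thesis using cycle_root_colourable_pair[OF cyc2 _ _ assms(4,5)] assms(2,3) cc comp by simp
  next
    assume "2 \<le> card (links c d)"
    then show ?thesis using cycle_root_colourable_pair[OF cyc3 _ _ assms(4,5)] assms(2,3) cc comp by simp
  next
    assume "2 \<le> card (links d a)"
    then show ?thesis using cycle_root_colourable_pair[OF cyc4 _ _ assms(4,5)] assms(2,3) cc comp by simp
  qed
qed

lemma card_links_ge2:
  assumes "x \<in> links u v" "y \<in> links u v" "x \<noteq> y"
  shows "2 \<le> card (links u v)"
proof -
  have "card {x,y} \<le> card (links u v)" using assms by (intro card_mono finite_links) auto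
  then show ?thesis using assms(3) by simp
qed

lemma card_links_ge3:
  assumes "x \<in> links u v" "y \<in> links u v" "z \<in> links u v" "distinct [x,y,z]"
  shows "3 \<le> card (links u v)"
proof -
  have "card {x,y,z} \<le> card (links u v)" using assms by (intro card_mono finite_links) auto
  then show ?thesis using assms(4) by simp
qed

lemma nbhd_unique_fourth:
  assumes "x \<in> nbhd v" "y \<in> nbhd v" "z \<in> nbhd v" "distinct [x,y,z]"
    and "u \<in> nbhd v - {x,y,z}" "u' \<in> nbhd v - {x,y,z}"
  shows "u = u'"
proof -
  obtain w where "nbhd v = {x,y,z,w}" "distinct [x,y,z,w]"
    by (rule nbhd_obtain3[OF assms(1-4)])
  then show ?thesis using assms(5,6) by auto
qed

lemma nbhd_other:
  assumes "x \<in> nbhd v" "y \<in> nbhd v" "x \<noteq> y"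
  obtains z where "z \<in> nbhd v - {x,y}"
proof -
  obtain c d where "nbhd v = {x,y,c,d}" "distinct [x,y,c,d]" by (rule nbhd_obtain2[OF assms])
  then show ?thesis using that[of c] by auto
qed

lemma links_diagonal_nbr:
  assumes cyc: "four_cycle a b c d" and z: "z \<in> nbhd a \<inter> nbhd c - {b,d}"
  shows "{z,c} \<in> links a b" "{a,z} \<in> links b c" "{z,a} \<in> links c d" "{c,z} \<in> links d a"
proof -
  note cy = four_cycleD[OF cyc]
  have "{a,z} \<in> E" "{c,z} \<in> E" "z \<noteq> b" "z \<noteq> d" using z by (auto simp: nbhd_def)
  then show "{z,c} \<in> links a b" "{a,z} \<in> links b c" "{z,a} \<in> links c d" "{c,z} \<in> links d a"
    using linksI[of z c a b] linksI[of a z b c] linksI[of z a c d] linksI[of c z d a] cy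
    by (simp_all add: insert_commute)
qed

lemma card_links_diagonal_nbr:
  assumes cyc: "four_cycle a b c d" and z: "z \<in> nbhd a \<inter> nbhd c - {b,d}"
  shows "2 \<le> card (links a b)" "2 \<le> card (links b c)" "2 \<le> card (links c d)" "2 \<le> card (links d a)"
proof -
  have cyc2: "four_cycle b c d a" and cyc3: "four_cycle c d a b" and cyc4: "four_cycle d a b c"
    using cyc four_cycle_rotate by blast+
  have "z \<noteq> b" "z \<noteq> d" using z by auto
  then show "2 \<le> card (links a b)" "2 \<le> card (links b c)" "2 \<le> card (links c d)" "2 \<le> card (links d a)"
    using card_links_ge2[OF links_opposite[OF cyc] links_diagonal_nbr(1)[OF cyc z]]
      card_links_ge2[OF links_opposite[OF cyc2] links_diagonal_nbr(2)[OF cyc z]]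
      card_links_ge2[OF links_opposite[OF cyc3] links_diagonal_nbr(3)[OF cyc z]]
      card_links_ge2[OF links_opposite[OF cyc4] links_diagonal_nbr(4)[OF cyc z]]
    by (auto simp: doubleton_eq_iff)
qed

lemma outer_nbr:
  assumes cyc: "four_cycle a b c d" and bd: "nbhd b \<inter> nbhd d = {a,c}" and s: "s \<in> nbhd b - {a,c}"
  shows "{b,s} \<in> E" "s \<noteq> a" "s \<noteq> c" "s \<noteq> d" "{d,s} \<notin> E"
proof -
  show "{b,s} \<in> E" "s \<noteq> a" "s \<noteq> c" using s by (auto simp: nbhd_def)
  then show "s \<noteq> d" using four_cycle_no_diagonal(2)[OF cyc] by auto
  show "{d,s} \<notin> E" using s bd by (auto simp: nbhd_def)
qed

text \<open>Around the 4-cycle \<open>a b c d\<close>, a further common neighbour of two opposite vertices adds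
  links; otherwise non-adjacent pendant edges at opposite vertices do not conflict and can share a
  colour.\<close>

lemma four_cycle_colourable_two_diagonal_nbrs:
  assumes cyc: "four_cycle a b c d"
    and z: "z \<in> nbhd a \<inter> nbhd c - {b,d}" and w: "w \<in> nbhd b \<inter> nbhd d - {a,c}"
  shows "strongly_colourable 22 (component a)"
proof (rule cycle_root_colourable_links[OF cyc])
  note cy = four_cycleD[OF cyc]
  have "{d,w} \<in> links a b"
    using w linksI[of d w a b] cy by (auto simp: nbhd_def insert_commute)
  moreover have "distinct [{d,c},{z,c},{d,w}]"
    using z w four_cycle_distinct[OF cyc] by (auto simp: doubleton_eq_iff)
  ultimately show "3 \<le> card (links a b)"
    using card_links_ge3 links_opposite[OF cyc] links_diagonal_nbr(1)[OF cyc z] by blast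
  show "2 \<le> card (links b c)" "2 \<le> card (links c d)"
    using card_links_diagonal_nbr[OF cyc z] by simp_all
qed

lemma four_cycle_colourable_diagonal_nbr_complete:
  assumes cyc: "four_cycle a b c d"
    and z: "z \<in> nbhd a \<inter> nbhd c - {b,d}" and bd: "nbhd b \<inter> nbhd d = {a,c}"
    and all_st: "\<And>s t. s \<in> nbhd b - {a,c} \<Longrightarrow> t \<in> nbhd d - {a,c} \<Longrightarrow> {s,t} \<in> E"
  shows "strongly_colourable 22 (component a)"
proof -
  note cy = four_cycleD[OF cyc] and nd = four_cycle_no_diagonal[OF cyc]
  have cyc4: "four_cycle d a b c" using cyc four_cycle_rotate by blast
  note links2 = card_links_diagonal_nbr[OF cyc z]
  have "b \<in> nbhd a" "d \<in> nbhd a" using cy by (simp_all add: nbhd_def insert_commute)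
  then obtain p where p: "p \<in> nbhd a - {b,d}" using cy(6) by (rule nbhd_other)
  have "a \<in> nbhd b" "c \<in> nbhd b" using cy by (simp_all add: nbhd_def insert_commute)
  then obtain s1 where s1: "s1 \<in> nbhd b - {a,c}" using cy(5) by (rule nbhd_other)
  have "a \<in> nbhd d" "c \<in> nbhd d" using cy by (simp_all add: nbhd_def insert_commute)
  then obtain t1 where t1: "t1 \<in> nbhd d - {a,c}" using cy(5) by (rule nbhd_other)
  have pa: "{a,p} \<in> E" "p \<noteq> b" "p \<noteq> d" "p \<noteq> c" using p nd(1) by (auto simp: nbhd_def)
  consider (ps) s where "s \<in> nbhd b - {a,c}" "{p,s} \<in> E"
    | (pt) t where "t \<in> nbhd d - {a,c}" "{p,t} \<in> E"
    | (none) "\<forall>s\<in>nbhd b - {a,c}. {p,s} \<notin> E" "\<forall>t\<in>nbhd d - {a,c}. {p,t} \<notin> E"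
    by blast
  then show ?thesis
  proof cases
    case (ps s)
    note s = outer_nbr[OF cyc bd ps(1)]
    have "{p,s} \<in> links a b" using linksI[of p s a b] ps(2) pa s by simp
    moreover have "distinct [{d,c},{z,c},{p,s}]" using z s pa by (auto simp: doubleton_eq_iff)
    ultimately show ?thesis
      using cycle_root_colourable_links[OF cyc _ links2(2,3)] card_links_ge3
        links_opposite[OF cyc] links_diagonal_nbr(1)[OF cyc z] by blast
  next
    case (pt t)
    have t: "{d,t} \<in> E" "t \<noteq> a" "t \<noteq> c" "t \<noteq> b" using pt(1) nd(2) by (auto simp: nbhd_def insert_commute)
    have "t \<noteq> z" using triangle_free[of a d z] z cy t by (auto simp: nbhd_def insert_commute)
    have "{t,p} \<in> links d a" using linksI[of t p d a] pt(2) pa t by (simp add: insert_commute)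
    moreover have "distinct [{c,b},{c,z},{t,p}]"
      using z t \<open>t \<noteq> z\<close> pa by (auto simp: doubleton_eq_iff)
    ultimately have "3 \<le> card (links d a)"
      using card_links_ge3 links_opposite[OF cyc4] links_diagonal_nbr(4)[OF cyc z] by blast
    then have "strongly_colourable 22 (component d)"
      using cycle_root_colourable_links[OF cyc4 _ links2(1,2)] by blast
    then show ?thesis using component_four_cycle[OF cyc4] by simp
  next
    case none
    note s = outer_nbr[OF cyc bd s1]
    have t: "{d,t1} \<in> E" "t1 \<noteq> a" using t1 by (auto simp: nbhd_def)
    have st: "{s1,t1} \<in> E" using all_st[OF s1 t1] .
    have "{a,p} \<in> common_conflicts a b c d" using pendant_common_conflicts(1)[OF cyc pa(1-3)] .
    moreover have "{s1,t1} \<in> common_conflicts a b c d"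
      using cross_common_conflicts[OF cyc s(1) t(1) st] s t1 by auto
    moreover have "\<not> conflict {a,p} {s1,t1}"
      using pendant_cross_not_conflict[OF cyc pa(1) s(1) t(1) st s(2) t(2)] none s1 t1 by blast
    moreover have "{a,p} \<noteq> {s1,t1}" using s(2) t(2) by (auto simp: doubleton_eq_iff)
    ultimately show ?thesis using cycle_root_colourable_pair[OF cyc _ _ _ _ links2(1)] by blast
  qed
qed

lemma four_cycle_colourable_one_diagonal_nbr:
  assumes cyc: "four_cycle a b c d"
    and z: "z \<in> nbhd a \<inter> nbhd c - {b,d}" and bd: "nbhd b \<inter> nbhd d = {a,c}"
  shows "strongly_colourable 22 (component a)"
proof (cases "\<exists>s\<in>nbhd b - {a,c}. \<exists>t\<in>nbhd d - {a,c}. {s,t} \<notin> E")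
  case True
  then obtain s t where s: "s \<in> nbhd b - {a,c}" and t: "t \<in> nbhd d - {a,c}" and st: "{s,t} \<notin> E"
    by blast
  have cyc2: "four_cycle b c d a" and cyc3: "four_cycle c d a b"
    using cyc four_cycle_rotate by blast+
  note s' = outer_nbr[OF cyc bd s]
  have "nbhd d \<inter> nbhd b = {c,a}" "t \<in> nbhd d - {c,a}" using bd t by auto
  note t' = outer_nbr[OF cyc3 this]
  have "\<not> conflict {b,s} {d,t}"
    using opposite_pendants_not_conflict[OF cyc2 s'(1) s'(5) t'(1) t'(5) st] .
  moreover have "{b,s} \<noteq> {d,t}" using t'(4) four_cycle_distinct[OF cyc] by (auto simp: doubleton_eq_iff)
  ultimately show ?thesis
    using cycle_root_colourable_pair[OF cyc _ _ _ _ card_links_diagonal_nbr(1)[OF cyc z]]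
      pendant_common_conflicts(2)[OF cyc s'(1,3,2)] pendant_common_conflicts(4)[OF cyc t'(1,3,2)]
    by blast
next
  case False
  then show ?thesis using four_cycle_colourable_diagonal_nbr_complete[OF cyc z bd] by blast
qed

lemma adj_nbrs_distinct: "{a,b} \<in> E \<Longrightarrow> {a,x} \<in> E \<Longrightarrow> {b,y} \<in> E \<Longrightarrow> x \<noteq> y"
  using triangle_free[of a b x] by auto

lemma four_cycle_outer_nbrs:
  assumes cyc: "four_cycle a b c d"
    and ac: "nbhd a \<inter> nbhd c = {b,d}" and bd: "nbhd b \<inter> nbhd d = {a,c}"
    and p: "p \<in> nbhd a - {b,d}" and q: "q \<in> nbhd c - {b,d}"
    and s: "s \<in> nbhd b - {a,c}" and t: "t \<in> nbhd d - {a,c}"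
  shows "{a,p} \<in> E" "{c,p} \<notin> E" "{c,q} \<in> E" "{a,q} \<notin> E"
    "{b,s} \<in> E" "{d,s} \<notin> E" "{d,t} \<in> E" "{b,t} \<notin> E"
    and "p \<notin> {a,b,c,d}" "q \<notin> {a,b,c,d}" "s \<notin> {a,b,c,d}" "t \<notin> {a,b,c,d}"
    and "p \<noteq> q" "p \<noteq> s" "p \<noteq> t" "q \<noteq> s" "q \<noteq> t" "s \<noteq> t"
proof -
  note cy = four_cycleD[OF cyc] and nd = four_cycle_no_diagonal[OF cyc]
  show in_E: "{a,p} \<in> E" "{c,q} \<in> E" "{b,s} \<in> E" "{d,t} \<in> E"
    using p q s t by (auto simp: nbhd_def)
  show N: "{c,p} \<notin> E" "{a,q} \<notin> E" "{d,s} \<notin> E" "{b,t} \<notin> E"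
    using p q s t ac bd by (auto simp: nbhd_def)
  show "p \<notin> {a,b,c,d}" "q \<notin> {a,b,c,d}" "s \<notin> {a,b,c,d}" "t \<notin> {a,b,c,d}"
    using p q s t in_E adj_distinct nd by (auto simp: insert_commute)
  show "p \<noteq> q" "s \<noteq> t" using in_E N by auto
  show "p \<noteq> s" using adj_nbrs_distinct[OF cy(1)] in_E by blast
  show "p \<noteq> t" using adj_nbrs_distinct[of a d] cy(4) in_E by (auto simp: insert_commute)
  show "q \<noteq> s" using adj_nbrs_distinct[of c b] cy(2) in_E by (auto simp: insert_commute)
  show "q \<noteq> t" using adj_nbrs_distinct[of c d] cy(3) in_E by (auto simp: insert_commute)
qed

lemma four_cycle_colourable_two_free_pairs:
  assumes cyc: "four_cycle a b c d"
    and ac: "nbhd a \<inter> nbhd c = {b,d}" and bd: "nbhd b \<inter> nbhd d = {a,c}"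
    and p: "p \<in> nbhd a - {b,d}" and q: "q \<in> nbhd c - {b,d}" and pq: "{p,q} \<notin> E"
    and s: "s \<in> nbhd b - {a,c}" and t: "t \<in> nbhd d - {a,c}" and st: "{s,t} \<notin> E"
  shows "strongly_colourable 22 (component a)"
proof (rule cycle_root_colourable_two_pairs[OF cyc])
  note v = four_cycle_outer_nbrs[OF cyc ac bd p q s t]
  have cyc2: "four_cycle b c d a" using cyc four_cycle_rotate by blast
  show "{{a,p},{c,q},{b,s},{d,t}} \<subseteq> common_conflicts a b c d"
    using pendant_common_conflicts[OF cyc] v by simp
  show "{a,p} \<noteq> {c,q}" "{b,s} \<noteq> {d,t}" using v by (auto simp: doubleton_eq_iff)
  show "\<not> conflict {a,p} {c,q}" using opposite_pendants_not_conflict[OF cyc v(1-4) pq] .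
  show "\<not> conflict {b,s} {d,t}" using opposite_pendants_not_conflict[OF cyc2 v(5,6,7,8) st] .
  show "({a,p} \<union> {c,q}) \<inter> ({b,s} \<union> {d,t}) = {}" using v four_cycle_distinct[OF cyc] by auto
qed

lemma card_links_outer_edge:
  assumes cyc: "four_cycle a b c d"
    and "p \<in> nbhd a - {b,d}" "s \<in> nbhd b - {a,c}" "{p,s} \<in> E"
  shows "2 \<le> card (links a b)"
proof (rule card_links_ge2[OF links_opposite[OF cyc]])
  show "{p,s} \<in> links a b" using linksI[of p s a b] assms(2-4) by (auto simp: nbhd_def)
  show "{d,c} \<noteq> {p,s}"
    using assms(2,3) four_cycle_no_diagonal(1)[OF cyc] by (auto simp: doubleton_eq_iff nbhd_def)
qed

lemma outer_nbr_not_adjacent_both: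
  assumes cyc: "four_cycle a b c d"
    and ac: "nbhd a \<inter> nbhd c = {b,d}" and bd: "nbhd b \<inter> nbhd d = {a,c}"
    and all_st: "\<And>s t. s \<in> nbhd b - {a,c} \<Longrightarrow> t \<in> nbhd d - {a,c} \<Longrightarrow> {s,t} \<in> E"
    and p: "p \<in> nbhd a - {b,d}" and q: "q \<in> nbhd c - {b,d}" and x: "x \<in> nbhd b - {a,c}"
  shows "{p,x} \<notin> E \<or> {q,x} \<notin> E"
proof -
  note cy = four_cycleD[OF cyc]
  have "a \<in> nbhd d" "c \<in> nbhd d" using cy by (simp_all add: nbhd_def insert_commute)
  then obtain t1 t2 where nbd: "nbhd d = {a,c,t1,t2}" "distinct [a,c,t1,t2]"
    using cy(5) by (rule nbhd_obtain2)
  then have t: "t1 \<in> nbhd d - {a,c}" "t2 \<in> nbhd d - {a,c}" by auto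
  note v1 = four_cycle_outer_nbrs[OF cyc ac bd p q x t(1)]
  note v2 = four_cycle_outer_nbrs[OF cyc ac bd p q x t(2)]
  have "b \<in> nbhd x" "t1 \<in> nbhd x" "t2 \<in> nbhd x" "distinct [b,t1,t2]"
    using v1(5,12) v2(12) all_st[OF x t(1)] all_st[OF x t(2)] nbd(2)
    by (auto simp: nbhd_def insert_commute)
  moreover have "p \<in> nbhd x - {b,t1,t2}" "q \<in> nbhd x - {b,t1,t2}" if "{p,x} \<in> E" "{q,x} \<in> E"
    using that v1(9,10,15,17) v2(15,17) by (auto simp: nbhd_def insert_commute)
  ultimately show ?thesis using nbhd_unique_fourth v1(13) by blast
qed

lemma four_cycle_colourable_one_free_pair:
  assumes cyc: "four_cycle a b c d"
    and ac: "nbhd a \<inter> nbhd c = {b,d}" and bd: "nbhd b \<inter> nbhd d = {a,c}"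
    and p: "p \<in> nbhd a - {b,d}" and q: "q \<in> nbhd c - {b,d}" and pq: "{p,q} \<notin> E"
    and all_st: "\<And>s t. s \<in> nbhd b - {a,c} \<Longrightarrow> t \<in> nbhd d - {a,c} \<Longrightarrow> {s,t} \<in> E"
  shows "strongly_colourable 22 (component a)"
proof -
  note cy = four_cycleD[OF cyc]
  have cyc2: "four_cycle b c d a" and cyc3: "four_cycle c d a b" and cyc4: "four_cycle d a b c"
    using cyc four_cycle_rotate by blast+
  have "a \<in> nbhd b" "c \<in> nbhd b" "a \<in> nbhd d" "c \<in> nbhd d"
    using cy by (simp_all add: nbhd_def insert_commute)
  then obtain s1 t1 where s1: "s1 \<in> nbhd b - {a,c}" and t1: "t1 \<in> nbhd d - {a,c}"
    using nbhd_other cy(5) by metis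
  note v = four_cycle_outer_nbrs[OF cyc ac bd p q]
  have g: "{a,p} \<in> common_conflicts a b c d" "{c,q} \<in> common_conflicts a b c d"
    using pendant_common_conflicts(1,3)[OF cyc] v(1,3)[OF s1 t1] v(9,10)[OF s1 t1] by auto
  have nc: "\<not> conflict {a,p} {c,q}" using opposite_pendants_not_conflict[OF cyc v(1-4)[OF s1 t1] pq] .
  have neq: "{a,p} \<noteq> {c,q}" using v(9,10)[OF s1 t1] cy(5) by (auto simp: doubleton_eq_iff)
  consider (ps) s where "s \<in> nbhd b - {a,c}" "{p,s} \<in> E"
    | (pt) t where "t \<in> nbhd d - {a,c}" "{p,t} \<in> E"
    | (qs) s where "s \<in> nbhd b - {a,c}" "{q,s} \<in> E"
    | (qt) t where "t \<in> nbhd d - {a,c}" "{q,t} \<in> E"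
    | (none) "\<forall>x\<in>nbhd b - {a,c} \<union> (nbhd d - {a,c}). {p,x} \<notin> E \<and> {q,x} \<notin> E"
    by blast
  then show ?thesis
  proof cases
    case (ps s)
    then have "2 \<le> card (links a b)" using card_links_outer_edge[OF cyc p] by blast
    then show ?thesis using cycle_root_colourable_pair_rotated[OF cyc g neq nc] by blast
  next
    case (pt t)
    have "p \<in> nbhd a - {d,b}" "{t,p} \<in> E" using p pt(2) by (auto simp: insert_commute)
    then have "2 \<le> card (links d a)" using card_links_outer_edge[OF cyc4 pt(1)] by blast
    then show ?thesis using cycle_root_colourable_pair_rotated[OF cyc g neq nc] by blast
  next
    case (qs s)
    have "s \<in> nbhd b - {c,a}" "{s,q} \<in> E" using qs by (auto simp: insert_commute)
    then have "2 \<le> card (links b c)" using card_links_outer_edge[OF cyc2 _ q] by blast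
    then show ?thesis using cycle_root_colourable_pair_rotated[OF cyc g neq nc] by blast
  next
    case (qt t)
    have "q \<in> nbhd c - {d,b}" "t \<in> nbhd d - {c,a}" using q qt(1) by auto
    then have "2 \<le> card (links c d)" using card_links_outer_edge[OF cyc3] qt(2) by blast
    then show ?thesis using cycle_root_colourable_pair_rotated[OF cyc g neq nc] by blast
  next
    case none
    note w = v[OF s1 t1]
    have st: "{s1,t1} \<in> E" using all_st[OF s1 t1] .
    have "{s1,t1} \<in> common_conflicts a b c d"
      using cross_common_conflicts[OF cyc w(5,7) st] w(11,12) by simp
    moreover have "\<not> conflict {a,p} {s1,t1}"
      using pendant_cross_not_conflict[OF cyc w(1,5,7) st] w(11,12) none s1 t1 by auto
    moreover have "{q,t1} \<notin> E" "{q,s1} \<notin> E" using none s1 t1 by auto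
    then have "\<not> conflict {c,q} {t1,s1}"
      using pendant_cross_not_conflict[OF cyc3 w(3,7,5)] st w(11,12) by (simp add: insert_commute)
    moreover have "distinct [{a,p},{c,q},{s1,t1}]" using w by (auto simp: doubleton_eq_iff)
    ultimately show ?thesis
      using cycle_root_colourable_triple[OF cyc _ _ nc] g by (simp add: insert_commute)
  qed
qed

lemma complete_sides_split:
  assumes cyc: "four_cycle a b c d"
    and ac: "nbhd a \<inter> nbhd c = {b,d}" and bd: "nbhd b \<inter> nbhd d = {a,c}"
    and all_pq: "\<And>p q. p \<in> nbhd a - {b,d} \<Longrightarrow> q \<in> nbhd c - {b,d} \<Longrightarrow> {p,q} \<in> E"
    and all_st: "\<And>s t. s \<in> nbhd b - {a,c} \<Longrightarrow> t \<in> nbhd d - {a,c} \<Longrightarrow> {s,t} \<in> E"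
    and nba: "nbhd a = {b,d,p1,p2}" "distinct [b,d,p1,p2]"
    and nbc: "nbhd c = {b,d,q1,q2}" "distinct [b,d,q1,q2]"
    and nbb: "nbhd b = {a,c,s1,s2}" "distinct [a,c,s1,s2]"
    and nbd: "nbhd d = {a,c,t1,t2}" "distinct [a,c,t1,t2]"
  obtains s s' t t' where "{s,s'} = {s1,s2}" "{t,t'} = {t1,t2}"
    "{p1,s} \<notin> E" "{p1,t} \<notin> E" "{q1,s'} \<notin> E" "{q1,t'} \<notin> E"
proof -
  have p: "p1 \<in> nbhd a - {b,d}" "p2 \<in> nbhd a - {b,d}" using nba by auto
  have q: "q1 \<in> nbhd c - {b,d}" "q2 \<in> nbhd c - {b,d}" using nbc by auto
  have s: "s1 \<in> nbhd b - {a,c}" "s2 \<in> nbhd b - {a,c}" using nbb by auto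
  have t: "t1 \<in> nbhd d - {a,c}" "t2 \<in> nbhd d - {a,c}" using nbd by auto
  note v = four_cycle_outer_nbrs[OF cyc ac bd]
  let ?X = "{s1,s2,t1,t2}"
  have X: "x \<notin> {a,c,p1,p2,q1,q2}" if "x \<in> ?X" for x
    using that v[OF p(1) q(1) s(1) t(1)] v[OF p(2) q(2) s(2) t(2)] v[OF p(1) q(1) s(2) t(2)]
      v[OF p(2) q(2) s(1) t(1)] by auto
  have dX: "distinct [s1,s2,t1,t2]"
    using nbb(2) nbd(2) v(18)[OF p(1) q(1) s(1) t(1)] v(18)[OF p(1) q(1) s(1) t(2)]
      v(18)[OF p(1) q(1) s(2) t(1)] v(18)[OF p(1) q(1) s(2) t(2)] by auto
  have "a \<in> nbhd p1" "q1 \<in> nbhd p1" "q2 \<in> nbhd p1" "distinct [a,q1,q2]"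
    using all_pq[OF p(1) q(1)] all_pq[OF p(1) q(2)] v(1,10)[OF p(1) q(1) s(1) t(1)]
      v(10)[OF p(1) q(2) s(1) t(1)] nbc(2) by (auto simp: nbhd_def insert_commute)
  note P = nbhd_unique_fourth[OF this]
  have "c \<in> nbhd q1" "p1 \<in> nbhd q1" "p2 \<in> nbhd q1" "distinct [c,p1,p2]"
    using all_pq[OF p(1) q(1)] all_pq[OF p(2) q(1)] v(3,9)[OF p(1) q(1) s(1) t(1)]
      v(9)[OF p(2) q(1) s(1) t(1)] nba(2) by (auto simp: nbhd_def insert_commute)
  note Q = nbhd_unique_fourth[OF this]
  have "p1 \<noteq> q1" using v(13)[OF p(1) q(1) s(1) t(1)] .
  have PQ: False if "x \<in> ?X" "{p1,x} \<in> E" "{q1,x} \<in> E" for x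
  proof (cases "x \<in> {s1,s2}")
    case True
    then show False using outer_nbr_not_adjacent_both[OF cyc ac bd all_st p(1) q(1)] s that(2,3) by blast
  next
    case False
    have "nbhd c \<inter> nbhd a = {d,b}" "nbhd d \<inter> nbhd b = {c,a}" using ac bd by auto
    moreover have "{u,v} \<in> E" if "u \<in> nbhd d - {c,a}" "v \<in> nbhd b - {c,a}" for u v
      using all_st[of v u] that by (auto simp: insert_commute)
    moreover have "x \<in> nbhd d - {c,a}" "q1 \<in> nbhd c - {d,b}" "p1 \<in> nbhd a - {d,b}"
      using False that(1) t p(1) q(1) by auto
    ultimately show False
      using outer_nbr_not_adjacent_both[OF four_cycle_rotate[OF four_cycle_rotate[OF cyc]]] that(2,3)
      by blast
  qed
  obtain s s' t t' where "{s,s'} = {s1,s2}" "{t,t'} = {t1,t2}"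
    "{p1,s} \<notin> E" "{p1,t} \<notin> E" "{q1,s'} \<notin> E" "{q1,t'} \<notin> E"
  proof (rule split_avoiding[OF dX, where P = "\<lambda>x. {p1,x} \<in> E" and Q = "\<lambda>x. {q1,x} \<in> E"])
    show "x = y" if "x \<in> ?X" "y \<in> ?X" "{p1,x} \<in> E" "{p1,y} \<in> E" for x y
      using P[of x y] that X by (auto simp: nbhd_def)
    show "x = y" if "x \<in> ?X" "y \<in> ?X" "{q1,x} \<in> E" "{q1,y} \<in> E" for x y
      using Q[of x y] that X by (auto simp: nbhd_def)
  qed (use PQ that in blast)+
  then show ?thesis using that by blast
qed

lemma four_cycle_colourable_no_free_pair:
  assumes cyc: "four_cycle a b c d"
    and ac: "nbhd a \<inter> nbhd c = {b,d}" and bd: "nbhd b \<inter> nbhd d = {a,c}"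
    and all_pq: "\<And>p q. p \<in> nbhd a - {b,d} \<Longrightarrow> q \<in> nbhd c - {b,d} \<Longrightarrow> {p,q} \<in> E"
    and all_st: "\<And>s t. s \<in> nbhd b - {a,c} \<Longrightarrow> t \<in> nbhd d - {a,c} \<Longrightarrow> {s,t} \<in> E"
  shows "strongly_colourable 22 (component a)"
proof -
  note cy = four_cycleD[OF cyc]
  have cyc3: "four_cycle c d a b" using cyc four_cycle_rotate by blast
  have "b \<in> nbhd a" "d \<in> nbhd a" "b \<in> nbhd c" "d \<in> nbhd c" "a \<in> nbhd b" "c \<in> nbhd b"
    "a \<in> nbhd d" "c \<in> nbhd d" using cy by (simp_all add: nbhd_def insert_commute)
  note n = this
  obtain p1 p2 where nba: "nbhd a = {b,d,p1,p2}" "distinct [b,d,p1,p2]"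
    by (rule nbhd_obtain2[OF n(1,2) cy(6)])
  obtain q1 q2 where nbc: "nbhd c = {b,d,q1,q2}" "distinct [b,d,q1,q2]"
    by (rule nbhd_obtain2[OF n(3,4) cy(6)])
  obtain s1 s2 where nbb: "nbhd b = {a,c,s1,s2}" "distinct [a,c,s1,s2]"
    by (rule nbhd_obtain2[OF n(5,6) cy(5)])
  obtain t1 t2 where nbd: "nbhd d = {a,c,t1,t2}" "distinct [a,c,t1,t2]"
    by (rule nbhd_obtain2[OF n(7,8) cy(5)])
  obtain s s' t t' where st: "{s,s'} = {s1,s2}" "{t,t'} = {t1,t2}"
    and avoid: "{p1,s} \<notin> E" "{p1,t} \<notin> E" "{q1,s'} \<notin> E" "{q1,t'} \<notin> E"
    by (rule complete_sides_split[OF cyc ac bd all_pq all_st nba nbc nbb nbd])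
  have pq: "p1 \<in> nbhd a - {b,d}" "q1 \<in> nbhd c - {b,d}" using nba nbc by auto
  have st': "s \<in> nbhd b - {a,c}" "s' \<in> nbhd b - {a,c}" "t \<in> nbhd d - {a,c}" "t' \<in> nbhd d - {a,c}"
    using st nbb nbd by (auto simp: doubleton_eq_iff)
  note v1 = four_cycle_outer_nbrs[OF cyc ac bd pq st'(1,3)]
  note v2 = four_cycle_outer_nbrs[OF cyc ac bd pq st'(2,4)]
  note v3 = four_cycle_outer_nbrs[OF cyc ac bd pq st'(1,4)]
  note v4 = four_cycle_outer_nbrs[OF cyc ac bd pq st'(2,3)]
  have v: "{a,p1} \<in> E" "{c,q1} \<in> E" "{b,s} \<in> E" "{d,t} \<in> E" "{b,s'} \<in> E" "{d,t'} \<in> E"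
    "p1 \<notin> {a,b,c,d}" "q1 \<notin> {a,b,c,d}" "s \<notin> {a,b,c,d}" "t \<notin> {a,b,c,d}"
    "s' \<notin> {a,b,c,d}" "t' \<notin> {a,b,c,d}"
    "p1 \<noteq> q1" "p1 \<noteq> s'" "p1 \<noteq> t'" "q1 \<noteq> s" "q1 \<noteq> t" "s \<noteq> t'" "s' \<noteq> t"
    using v1(1,3,5,7,9,10,11,12,13) v2(5,7,11,12,14,15) v3(16,18) v4(17,18) by simp_all
  have "s \<noteq> s'" "t \<noteq> t'" using st nbb(2) nbd(2) by (auto simp: doubleton_eq_iff)
  have in_E: "{s,t} \<in> E" "{s',t'} \<in> E" using all_st st' by blast+
  show ?thesis
  proof (rule cycle_root_colourable_two_pairs[OF cyc])
    show "{{a,p1},{s,t},{c,q1},{s',t'}} \<subseteq> common_conflicts a b c d"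
      using pendant_common_conflicts(1,3)[OF cyc] cross_common_conflicts[OF cyc] v in_E by simp
    show "{a,p1} \<noteq> {s,t}" "{c,q1} \<noteq> {s',t'}" using v by (auto simp: doubleton_eq_iff)
    show "\<not> conflict {a,p1} {s,t}"
      using pendant_cross_not_conflict[OF cyc v(1,3,4) in_E(1)] v avoid by simp
    have "\<not> conflict {c,q1} {t',s'}"
      using pendant_cross_not_conflict[OF cyc3 v(2,6,5)] in_E(2) v avoid by (simp add: insert_commute)
    then show "\<not> conflict {c,q1} {s',t'}" by (simp add: insert_commute)
    show "({a,p1} \<union> {s,t}) \<inter> ({c,q1} \<union> {s',t'}) = {}"
      using v cy(5) \<open>s \<noteq> s'\<close> \<open>t \<noteq> t'\<close> by auto
  qed
qed

lemma four_cycle_colourable_no_diagonal_nbr: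
  assumes cyc: "four_cycle a b c d"
    and ac: "nbhd a \<inter> nbhd c = {b,d}" and bd: "nbhd b \<inter> nbhd d = {a,c}"
  shows "strongly_colourable 22 (component a)"
proof (cases "\<exists>p\<in>nbhd a - {b,d}. \<exists>q\<in>nbhd c - {b,d}. {p,q} \<notin> E")
  case True
  then obtain p q where p: "p \<in> nbhd a - {b,d}" and q: "q \<in> nbhd c - {b,d}" and "{p,q} \<notin> E"
    by blast
  show ?thesis
  proof (cases "\<exists>s\<in>nbhd b - {a,c}. \<exists>t\<in>nbhd d - {a,c}. {s,t} \<notin> E")
    case True
    then show ?thesis using four_cycle_colourable_two_free_pairs[OF cyc ac bd p q \<open>{p,q} \<notin> E\<close>] by blast
  next
    case False
    then show ?thesis using four_cycle_colourable_one_free_pair[OF cyc ac bd p q \<open>{p,q} \<notin> E\<close>] by blast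
  qed
next
  case all_pq: False
  show ?thesis
  proof (cases "\<exists>s\<in>nbhd b - {a,c}. \<exists>t\<in>nbhd d - {a,c}. {s,t} \<notin> E")
    case True
    then obtain s t where s: "s \<in> nbhd b - {c,a}" and t: "t \<in> nbhd d - {c,a}" and "{s,t} \<notin> E"
      by blast
    have "nbhd b \<inter> nbhd d = {c,a}" "nbhd c \<inter> nbhd a = {d,b}" using ac bd by auto
    moreover have "{x,y} \<in> E" if "x \<in> nbhd c - {d,b}" "y \<in> nbhd a - {d,b}" for x y
    proof -
      have "{y,x} \<in> E" using all_pq that by auto
      then show ?thesis by (simp add: insert_commute)
    qed
    ultimately have "strongly_colourable 22 (component b)"
      using four_cycle_colourable_one_free_pair[OF four_cycle_rotate[OF cyc] _ _ s t \<open>{s,t} \<notin> E\<close>]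
      by blast
    then show ?thesis using component_four_cycle[OF cyc] by simp
  next
    case False
    then show ?thesis using four_cycle_colourable_no_free_pair[OF cyc ac bd] all_pq by blast
  qed
qed

lemma four_cycle_colourable:
  assumes cyc: "four_cycle a b c d"
  shows "strongly_colourable 22 (component a)"
proof -
  note cy = four_cycleD[OF cyc]
  have sub: "{b,d} \<subseteq> nbhd a \<inter> nbhd c" "{a,c} \<subseteq> nbhd b \<inter> nbhd d"
    using cy by (auto simp: nbhd_def insert_commute)
  show ?thesis
  proof (cases "nbhd a \<inter> nbhd c = {b,d}")
    case False
    then obtain z where z: "z \<in> nbhd a \<inter> nbhd c - {b,d}" using sub(1) by blast
    show ?thesis
    proof (cases "nbhd b \<inter> nbhd d = {a,c}")
      case True
      then show ?thesis using four_cycle_colourable_one_diagonal_nbr[OF cyc z] by blast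
    next
      case False
      then obtain w where "w \<in> nbhd b \<inter> nbhd d - {a,c}" using sub(2) by blast
      then show ?thesis using four_cycle_colourable_two_diagonal_nbrs[OF cyc z] by blast
    qed
  next
    case ac: True
    show ?thesis
    proof (cases "nbhd b \<inter> nbhd d = {a,c}")
      case True
      then show ?thesis using four_cycle_colourable_no_diagonal_nbr[OF cyc ac] by blast
    next
      case False
      then obtain w where "w \<in> nbhd b \<inter> nbhd d - {c,a}" using sub(2) by blast
      moreover have "nbhd c \<inter> nbhd a = {d,b}" using ac by auto
      ultimately have "strongly_colourable 22 (component b)"
        using four_cycle_colourable_one_diagonal_nbr[OF four_cycle_rotate[OF cyc]] by blast
      then show ?thesis using component_four_cycle[OF cyc] by simp
    qed
  qed
qed

section \<open>Components without a 4-cycle\<close>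

lemma nbhd_avoid_one:
  assumes "x \<in> nbhd v" "\<And>y z. y \<in> nbhd v - {x} \<Longrightarrow> z \<in> nbhd v - {x} \<Longrightarrow> P y \<Longrightarrow> P z \<Longrightarrow> y = z"
  obtains y where "y \<in> nbhd v - {x}" "\<not> P y"
proof -
  obtain b c d where "nbhd v = {x,b,c,d}" "distinct [x,b,c,d]" by (rule nbhd_obtain1[OF assms(1)])
  then have "b \<in> nbhd v - {x}" "c \<in> nbhd v - {x}" "b \<noteq> c" by auto
  then show ?thesis using that assms(2) by blast
qed

lemma nbhd_avoid_two:
  assumes "x \<in> nbhd v"
    and "\<And>y z. y \<in> nbhd v - {x} \<Longrightarrow> z \<in> nbhd v - {x} \<Longrightarrow> P y \<Longrightarrow> P z \<Longrightarrow> y = z"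
    and "\<And>y z. y \<in> nbhd v - {x} \<Longrightarrow> z \<in> nbhd v - {x} \<Longrightarrow> Q y \<Longrightarrow> Q z \<Longrightarrow> y = z"
  obtains y where "y \<in> nbhd v - {x}" "\<not> P y" "\<not> Q y"
proof -
  obtain b c d where "nbhd v = {x,b,c,d}" "distinct [x,b,c,d]" by (rule nbhd_obtain1[OF assms(1)])
  then have "b \<in> nbhd v - {x}" "c \<in> nbhd v - {x}" "d \<in> nbhd v - {x}" "distinct [b,c,d]" by auto
  then show ?thesis using that assms(2,3) by (metis distinct_length_2_or_more)
qed

lemma nbhd_avoid_one_twice:
  assumes "x \<in> nbhd v" "\<And>y z. y \<in> nbhd v - {x} \<Longrightarrow> z \<in> nbhd v - {x} \<Longrightarrow> P y \<Longrightarrow> P z \<Longrightarrow> y = z"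
  obtains y y' where "y \<in> nbhd v - {x}" "y' \<in> nbhd v - {x}" "y \<noteq> y'" "\<not> P y" "\<not> P y'"
proof -
  obtain b c d where "nbhd v = {x,b,c,d}" "distinct [x,b,c,d]" by (rule nbhd_obtain1[OF assms(1)])
  then have "b \<in> nbhd v - {x}" "c \<in> nbhd v - {x}" "d \<in> nbhd v - {x}" "distinct [b,c,d]" by auto
  then show ?thesis using that assms(2) by (metis distinct_length_2_or_more)
qed

definition c4_free_component :: "'a \<Rightarrow> bool" where
  "c4_free_component r \<longleftrightarrow> (\<forall>a\<in>component r. \<forall>b c d. \<not> four_cycle a b c d)"

lemma common_nbr_unique:
  assumes no_c4: "c4_free_component r"
    and "x \<in> component r" "x \<noteq> y" "w \<in> nbhd x \<inter> nbhd y" "w' \<in> nbhd x \<inter> nbhd y"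
  shows "w = w'"
proof (rule ccontr)
  assume "w \<noteq> w'"
  then have "four_cycle x w y w'" using assms(3-5) by (auto simp: four_cycle_def nbhd_def insert_commute)
  then show False using no_c4 assms(2) by (auto simp: c4_free_component_def)
qed

lemma at_most_one_nbr_in_nbhd:
  assumes "c4_free_component r" "a \<in> component r" "a \<noteq> x" "y \<in> nbhd x" "z \<in> nbhd x"
    and "{a,y} \<in> E" "{a,z} \<in> E"
  shows "y = z"
  using common_nbr_unique[OF assms(1-3)] assms(4-7) by (auto simp: nbhd_def)

lemma nbhd_in_component: "v \<in> component r \<Longrightarrow> w \<in> nbhd v \<Longrightarrow> w \<in> component r"
  using component_closed by (simp add: nbhd_def)

text \<open>Without 4-cycles an edge has no links, so all savings come from merged colour classes: the
  edges \<open>x\<^sub>i a\<^sub>i\<close> behind three neighbours \<open>x\<^sub>2, x\<^sub>3, x\<^sub>4\<close> of the root are chosen pairwise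
  non-conflicting, and so are two edges \<open>b w\<close>, \<open>b' w'\<close> at distance two behind \<open>x\<^sub>1\<close>.\<close>

lemma star_child:
  assumes no_c4: "c4_free_component r"
    and "xi \<in> nbhd r" "xj \<in> nbhd r" "xi \<noteq> xj" "a \<in> nbhd xi - {r}"
  shows "{xj,a} \<notin> E" "a \<notin> nbhd r" "a \<noteq> xj" "a \<in> component r"
proof -
  have xi: "xi \<in> component r" using nbhd_in_component[OF self_in_component assms(2)] .
  then show "a \<in> component r" using nbhd_in_component assms(5) by blast
  show "{xj,a} \<notin> E"
  proof
    assume "{xj,a} \<in> E"
    then have "a \<in> nbhd xi \<inter> nbhd xj" "r \<in> nbhd xi \<inter> nbhd xj"
      using assms(2,3,5) by (auto simp: nbhd_def insert_commute)
    then show False using common_nbr_unique[OF no_c4 xi assms(4)] assms(5) by blast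
  qed
  show "a \<notin> nbhd r" using triangle_free[of r xi a] assms(2,5) by (auto simp: nbhd_def)
  then show "a \<noteq> xj" using assms(3) by blast
qed

lemma star_children:
  assumes no_c4: "c4_free_component r"
    and "x2 \<in> nbhd r" "x3 \<in> nbhd r" "x4 \<in> nbhd r" "distinct [x2,x3,x4]"
  obtains a2 a3 a4 where "a2 \<in> nbhd x2 - {r}" "a3 \<in> nbhd x3 - {r}" "a4 \<in> nbhd x4 - {r}"
    "{a2,a3} \<notin> E" "{a2,a4} \<notin> E" "{a3,a4} \<notin> E"
proof -
  have r: "r \<in> nbhd x2" "r \<in> nbhd x3" "r \<in> nbhd x4" using assms(2-4) nbhd_sym by blast+
  obtain a2 where a2: "a2 \<in> nbhd x2 - {r}"
    using nbhd_avoid_one[OF r(1), of "\<lambda>_. False"] by blast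
  note c2 = star_child[OF no_c4 assms(2)]
  note unique = at_most_one_nbr_in_nbhd[OF no_c4]
  obtain a3 where a3: "a3 \<in> nbhd x3 - {r}" "{a2,a3} \<notin> E"
  proof (rule nbhd_avoid_one[OF r(2), of "\<lambda>y. {a2,y} \<in> E"])
    show "y = z" if "y \<in> nbhd x3 - {r}" "z \<in> nbhd x3 - {r}" "{a2,y} \<in> E" "{a2,z} \<in> E" for y z
      using unique[of a2 x3 y z] c2[OF assms(3) _ a2] that assms(5) by auto
  qed
  note c3 = star_child[OF no_c4 assms(3)]
  obtain a4 where "a4 \<in> nbhd x4 - {r}" "{a2,a4} \<notin> E" "{a3,a4} \<notin> E"
  proof (rule nbhd_avoid_two[OF r(3), of "\<lambda>y. {a2,y} \<in> E" "\<lambda>y. {a3,y} \<in> E"])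
    show "y = z" if "y \<in> nbhd x4 - {r}" "z \<in> nbhd x4 - {r}" "{a2,y} \<in> E" "{a2,z} \<in> E" for y z
      using unique[of a2 x4 y z] c2[OF assms(4) _ a2] that assms(5) by auto
    show "y = z" if "y \<in> nbhd x4 - {r}" "z \<in> nbhd x4 - {r}" "{a3,y} \<in> E" "{a3,z} \<in> E" for y z
      using unique[of a3 x4 y z] c3[OF assms(4) _ a3(1)] that assms(5) by auto
  qed
  then show ?thesis using that a2 a3 by blast
qed

lemma star_grandchildren:
  assumes no_c4: "c4_free_component r" and x1: "x1 \<in> component r" "u \<in> nbhd x1"
    and A: "\<And>a. a \<in> {a2,a3,a4} \<Longrightarrow> a \<in> component r \<and> a \<noteq> x1"
  obtains b b' w w' where "b \<in> nbhd x1 - {u}" "b' \<in> nbhd x1 - {u}" "b \<noteq> b'"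
    "w \<in> nbhd b - {x1}" "w' \<in> nbhd b' - {x1}" "w \<notin> {a2,a3,a4}" "w' \<notin> {a2,a3,a4}" "{w,w'} \<notin> E"
proof -
  let ?A = "{a2,a3,a4}"
  define heavy where "heavy s \<longleftrightarrow> (\<exists>y z. y \<in> ?A \<and> z \<in> ?A \<and> y \<noteq> z \<and> {s,y} \<in> E \<and> {s,z} \<in> E)" for s
  note unique = at_most_one_nbr_in_nbhd[OF no_c4]
  obtain b b' where b: "b \<in> nbhd x1 - {u}" "b' \<in> nbhd x1 - {u}" "b \<noteq> b'" "\<not> heavy b" "\<not> heavy b'"
  proof (rule nbhd_avoid_one_twice[OF x1(2), of heavy])
    fix s s' assume s: "s \<in> nbhd x1 - {u}" "s' \<in> nbhd x1 - {u}" "heavy s" "heavy s'"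
    then obtain a where "a \<in> ?A" "{s,a} \<in> E" "{s',a} \<in> E" unfolding heavy_def by blast
    then show "s = s'" using unique[of a x1 s s'] A s(1,2) by (auto simp: insert_commute)
  qed
  have light: "y = z" if "\<not> heavy c" "y \<in> ?A" "z \<in> ?A" "y \<in> nbhd c" "z \<in> nbhd c" for c y z
    using that unfolding heavy_def nbhd_def by blast
  have "x1 \<in> nbhd b" "x1 \<in> nbhd b'" using b(1,2) nbhd_sym by blast+
  note x1b = this
  obtain w where w: "w \<in> nbhd b - {x1}" "w \<notin> ?A"
    by (rule nbhd_avoid_one[OF x1b(1), of "\<lambda>y. y \<in> ?A"]) (use light[OF b(4)] in blast)
  have "b \<in> component r" using nbhd_in_component[OF x1(1)] b(1) by blast
  then have w_K: "w \<in> component r" using nbhd_in_component w(1) by blast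
  have "w \<noteq> b'" using triangle_free[of x1 b b'] w(1) b(1,2) by (auto simp: nbhd_def)
  obtain w' where "w' \<in> nbhd b' - {x1}" "w' \<notin> ?A" "{w,w'} \<notin> E"
  proof (rule nbhd_avoid_two[OF x1b(2), of "\<lambda>y. y \<in> ?A" "\<lambda>y. {w,y} \<in> E"])
    show "y = z" if "y \<in> nbhd b' - {x1}" "z \<in> nbhd b' - {x1}" "y \<in> ?A" "z \<in> ?A" for y z
      using light[OF b(5)] that by blast
    show "y = z" if "y \<in> nbhd b' - {x1}" "z \<in> nbhd b' - {x1}" "{w,y} \<in> E" "{w,z} \<in> E" for y z
      using unique[OF w_K \<open>w \<noteq> b'\<close>] that by blast
  qed
  then show ?thesis using that b(1-3) w by blast
qed

lemma star_root_colourable_identified: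
  assumes r: "r \<in> V" and nbr: "nbhd r = {x1,x2,x3,x4}" "distinct [x1,x2,x3,x4]"
    and P: "P \<subseteq> E" "card P \<le> 22" "pairwise disjnt P" "\<And>e. e \<in> P \<Longrightarrow> r \<notin> e"
    and rep: "\<And>e. e \<notin> P \<Longrightarrow> rep e = e" "\<And>e. e \<in> P \<Longrightarrow> rep e \<in> P"
      "\<And>e f. e \<in> P \<Longrightarrow> f \<in> P \<Longrightarrow> rep e = rep f \<Longrightarrow> \<not> conflict e f"
    and savings: "card (rep ` conflicts {r,x1}) \<le> 21" "card (rep ` conflicts {r,x2}) \<le> 22"
      "card (rep ` conflicts {r,x3}) \<le> 23"
  shows "strongly_colourable 22 (component r)"
proof -
  have x: "{r,x} \<in> E" if "x \<in> {x1,x2,x3,x4}" for x using that nbr(1) by (auto simp: nbhd_def)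
  have "rooted_component V E r {r} {r,x1} {r,x2} {r,x3} {r,x4} P rep"
  proof (intro rooted_component.intro[OF quartic_triangle_free_axioms] rooted_component_axioms.intro)
    show "{r} \<subseteq> component r" using self_in_component by simp
    show "f \<in> E \<and> f \<inter> {r} \<noteq> {}" if "f \<in> {{r,x1},{r,x2},{r,x3},{r,x4}}" for f
      using that x by auto
    show "distinct [{r,x1},{r,x2},{r,x3},{r,x4}]" using nbr(2) by (auto simp: doubleton_eq_iff)
    show "conflict e f"
      if "e \<in> {{r,x1},{r,x2},{r,x3},{r,x4}}" "f \<in> {{r,x1},{r,x2},{r,x3},{r,x4}}" "e \<noteq> f" for e f
      using that conflict_if_share[of e f r] by auto
    show "conflict e f" if e: "e \<in> E" "e \<inter> {r} \<noteq> {}" "e \<notin> {{r,x1},{r,x2},{r,x3},{r,x4}}" for e f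
    proof -
      have "r \<in> e" using e(2) by blast
      then obtain y where "e = {r,y}" using e(1) edge_at by blast
      then show ?thesis using e nbr(1) by (auto simp: nbhd_def)
    qed
    show "P \<inter> {{r,x1},{r,x2},{r,x3},{r,x4}} = {}" using P(4) by auto
  qed (use r P rep savings in auto)
  then show ?thesis by (rule rooted_component.colourable)
qed

lemma star_configuration:
  assumes r: "r \<in> V" and no_c4: "c4_free_component r"
  obtains x1 x2 x3 x4 a2 a3 a4 b b' w w' where
    "nbhd r = {x1,x2,x3,x4}" "distinct [r,x1,x2,a2,x3,a3,x4,a4,b,w,b',w']"
    "{x2,a2} \<in> E" "{x3,a3} \<in> E" "{x4,a4} \<in> E" "{x1,b} \<in> E" "{x1,b'} \<in> E" "{b,w} \<in> E" "{b',w'} \<in> E"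
    "{x2,a3} \<notin> E" "{x2,a4} \<notin> E" "{x3,a2} \<notin> E" "{x3,a4} \<notin> E" "{x4,a2} \<notin> E" "{x4,a3} \<notin> E"
    "{a2,a3} \<notin> E" "{a2,a4} \<notin> E" "{a3,a4} \<notin> E"
    "{b,b'} \<notin> E" "{b,w'} \<notin> E" "{w,b'} \<notin> E" "{w,w'} \<notin> E"
proof -
  have "nbhd r \<noteq> {}" using card_nbhd[OF r] by auto
  then obtain x1 where "x1 \<in> nbhd r" by blast
  then obtain x2 x3 x4 where nbr: "nbhd r = {x1,x2,x3,x4}" "distinct [x1,x2,x3,x4]"
    by (rule nbhd_obtain1)
  have xn: "x1 \<in> nbhd r" "x2 \<in> nbhd r" "x3 \<in> nbhd r" "x4 \<in> nbhd r" using nbr(1) by auto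
  have xd: "x1 \<noteq> x2" "x1 \<noteq> x3" "x1 \<noteq> x4" "x2 \<noteq> x3" "x2 \<noteq> x4" "x3 \<noteq> x4" using nbr(2) by auto
  have xr: "x1 \<noteq> r" "x2 \<noteq> r" "x3 \<noteq> r" "x4 \<noteq> r" using xn adj_distinct by (auto simp: nbhd_def)
  obtain a2 a3 a4 where a: "a2 \<in> nbhd x2 - {r}" "a3 \<in> nbhd x3 - {r}" "a4 \<in> nbhd x4 - {r}"
    and aa: "{a2,a3} \<notin> E" "{a2,a4} \<notin> E" "{a3,a4} \<notin> E"
    by (rule star_children[OF no_c4 xn(2-4)]) (use nbr(2) in simp)
  note ch = star_child[OF no_c4]
  have a2: "{x1,a2} \<notin> E" "{x3,a2} \<notin> E" "{x4,a2} \<notin> E" "a2 \<notin> nbhd r" "a2 \<in> component r"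
    using ch[OF xn(2) xn(1) _ a(1)] ch[OF xn(2) xn(3) _ a(1)] ch[OF xn(2) xn(4) _ a(1)] xd by auto
  have a3: "{x1,a3} \<notin> E" "{x2,a3} \<notin> E" "{x4,a3} \<notin> E" "a3 \<notin> nbhd r" "a3 \<in> component r"
    using ch[OF xn(3) xn(1) _ a(2)] ch[OF xn(3) xn(2) _ a(2)] ch[OF xn(3) xn(4) _ a(2)] xd by auto
  have a4: "{x1,a4} \<notin> E" "{x2,a4} \<notin> E" "{x3,a4} \<notin> E" "a4 \<notin> nbhd r" "a4 \<in> component r"
    using ch[OF xn(4) xn(1) _ a(3)] ch[OF xn(4) xn(2) _ a(3)] ch[OF xn(4) xn(3) _ a(3)] xd by auto
  have x1: "x1 \<in> component r" "r \<in> nbhd x1"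
    using nbhd_in_component[OF self_in_component xn(1)] xn(1) nbhd_sym by blast+
  obtain b b' w w' where bw: "b \<in> nbhd x1 - {r}" "b' \<in> nbhd x1 - {r}" "b \<noteq> b'"
    "w \<in> nbhd b - {x1}" "w' \<in> nbhd b' - {x1}" "w \<notin> {a2,a3,a4}" "w' \<notin> {a2,a3,a4}" "{w,w'} \<notin> E"
  proof (rule star_grandchildren[OF no_c4 x1])
    show "a \<in> component r \<and> a \<noteq> x1" if "a \<in> {a2,a3,a4}" for a
      using that a2 a3 a4 xn(1) by auto
  qed
  have b: "{x2,b} \<notin> E" "{x3,b} \<notin> E" "{x4,b} \<notin> E" "b \<notin> nbhd r"
    using ch[OF xn(1) xn(2) _ bw(1)] ch[OF xn(1) xn(3) _ bw(1)] ch[OF xn(1) xn(4) _ bw(1)] xd by auto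
  have b': "{x2,b'} \<notin> E" "{x3,b'} \<notin> E" "{x4,b'} \<notin> E" "b' \<notin> nbhd r"
    using ch[OF xn(1) xn(2) _ bw(2)] ch[OF xn(1) xn(3) _ bw(2)] ch[OF xn(1) xn(4) _ bw(2)] xd by auto
  have b_K: "b \<in> component r" using nbhd_in_component[OF x1(1)] bw(1) by blast
  have in_E: "{x2,a2} \<in> E" "{x3,a3} \<in> E" "{x4,a4} \<in> E" "{x1,b} \<in> E" "{x1,b'} \<in> E" "{b,w} \<in> E" "{b',w'} \<in> E"
    using a bw by (auto simp: nbhd_def)
  have bb': "{b,b'} \<notin> E" using triangle_free[of x1 b b'] in_E by blast
  have "x1 \<in> nbhd b \<inter> nbhd b'" using in_E by (auto simp: nbhd_def insert_commute)
  note unique = common_nbr_unique[OF no_c4 b_K bw(3) this]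
  have bw': "{b,w'} \<notin> E" "{w,b'} \<notin> E"
  proof -
    have "w' \<notin> nbhd b \<inter> nbhd b'" "w \<notin> nbhd b \<inter> nbhd b'" using unique bw(4,5) by blast+
    then show "{b,w'} \<notin> E" "{w,b'} \<notin> E" using in_E(6,7) by (auto simp: nbhd_def insert_commute)
  qed
  have "w \<noteq> r" "w' \<noteq> r" using b(4) b'(4) in_E(6,7) by (auto simp: nbhd_def insert_commute)
  moreover have "w \<noteq> b" "w' \<noteq> b'" "b \<noteq> x1" "b' \<noteq> x1"
    using adj_distinct[OF in_E(6)] adj_distinct[OF in_E(7)] adj_distinct[OF in_E(4)] adj_distinct[OF in_E(5)] by auto
  moreover have "a2 \<noteq> r" "a3 \<noteq> r" "a4 \<noteq> r" using a by auto
  moreover have "w \<noteq> b'" "w' \<noteq> b" "w \<noteq> w'" using in_E bb' bw' by (auto simp: insert_commute)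
  moreover have "w \<noteq> x2" "w \<noteq> x3" "w \<noteq> x4" "w' \<noteq> x2" "w' \<noteq> x3" "w' \<noteq> x4"
    using b b' in_E(6,7) by (auto simp: insert_commute)
  moreover have "a2 \<noteq> a3" "a2 \<noteq> a4" "a3 \<noteq> a4" using a2 a3 in_E by auto
  moreover have "b \<noteq> a2" "b \<noteq> a3" "b \<noteq> a4" "b' \<noteq> a2" "b' \<noteq> a3" "b' \<noteq> a4"
    using a2 a3 a4 in_E by auto
  ultimately have "distinct [r,x1,x2,a2,x3,a3,x4,a4,b,w,b',w']"
    using xd xr a2(4) a3(4) a4(4) b(4) b'(4) xn bw(1-7) by auto
  then show ?thesis using that nbr(1) in_E a2 a3 a4 aa bb' bw' bw(8) by blast
qed

lemma star_root_colourable_merged: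
  assumes r: "r \<in> V" and nbr: "nbhd r = {x1,x2,x3,x4}" "distinct [x1,x2,x3,x4]"
    and M: "{m2,m3,m4} \<subseteq> conflicts {r,x1} \<inter> conflicts {r,x2} \<inter> conflicts {r,x3}"
      "\<not> conflict m2 m3" "\<not> conflict m2 m4" "\<not> conflict m3 m4"
    and Q: "{p,p'} \<subseteq> conflicts {r,x1}" "\<not> conflict p p'"
    and d: "distinct [m2,m3,m4,p,p']" "pairwise disjnt {m2,m3,m4,p,p'}" "r \<notin> m2 \<union> m3 \<union> m4 \<union> p \<union> p'"
  shows "strongly_colourable 22 (component r)"
proof -
  define rep where "rep e = (if e = m3 \<or> e = m4 then m2 else if e = p' then p else e)" for e
  have rep_eq: "rep m2 = m2" "rep m3 = m2" "rep m4 = m2" "rep p = p" "rep p' = p"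
    using d(1) unfolding rep_def by auto
  have in_E: "{m2,m3,m4,p,p'} \<subseteq> E" using M(1) Q(1) by (auto simp: conflicts_def)
  have xE: "{r,x1} \<in> E" "{r,x2} \<in> E" "{r,x3} \<in> E" using nbr(1) by (auto simp: nbhd_def)
  show ?thesis
  proof (rule star_root_colourable_identified[OF r nbr, where P = "{m2,m3,m4,p,p'}" and rep = rep])
    show "card {m2,m3,m4,p,p'} \<le> 22" using card_length[of "[m2,m3,m4,p,p']"] by simp
    show "rep e = e" if "e \<notin> {m2,m3,m4,p,p'}" for e using that by (simp add: rep_def)
    show "rep e \<in> {m2,m3,m4,p,p'}" if "e \<in> {m2,m3,m4,p,p'}" for e using that rep_eq by auto
    show "\<not> conflict e f" if "e \<in> {m2,m3,m4,p,p'}" "f \<in> {m2,m3,m4,p,p'}" "rep e = rep f" for e f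
    proof -
      have cls: "(x \<in> {m2,m3,m4} \<and> rep x = m2) \<or> (x \<in> {p,p'} \<and> rep x = p)"
        if "x \<in> {m2,m3,m4,p,p'}" for x
        using that rep_eq by (elim insertE emptyE) simp_all
      have "m2 \<noteq> p" using d(1) by simp
      then have "(e \<in> {m2,m3,m4} \<and> f \<in> {m2,m3,m4}) \<or> (e \<in> {p,p'} \<and> f \<in> {p,p'})"
        using cls[OF that(1)] cls[OF that(2)] that(3) by (elim disjE) simp_all
      then show ?thesis using M(2-4) Q(2) conflict_sym not_conflict_self by blast
    qed
    have "card (rep ` conflicts {r,x1}) + card {m3,m4,p'} + card (links r x1) \<le> 24"
    proof (rule card_rep_conflicts_savings[OF xE(1)])
      show "{m3,m4,p'} \<subseteq> conflicts {r,x1}" using M(1) Q(1) by auto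
      show "\<exists>h\<in>conflicts {r,x1} - {m3,m4,p'}. rep g = rep h" if "g \<in> {m3,m4,p'}" for g
      proof -
        have "m2 \<in> conflicts {r,x1} - {m3,m4,p'}" "p \<in> conflicts {r,x1} - {m3,m4,p'}"
          using M(1) Q(1) d(1) by auto
        moreover have "rep g = rep m2 \<or> rep g = rep p" using that rep_eq by auto
        ultimately show ?thesis by blast
      qed
    qed
    then show "card (rep ` conflicts {r,x1}) \<le> 21" using d(1) by simp
    have "card (rep ` conflicts {r,x2}) + card {m3,m4} + card (links r x2) \<le> 24"
    proof (rule card_rep_conflicts_savings[OF xE(2)])
      show "{m3,m4} \<subseteq> conflicts {r,x2}" using M(1) by auto
      have "m2 \<in> conflicts {r,x2} - {m3,m4}" using M(1) d(1) by auto
      then show "\<exists>h\<in>conflicts {r,x2} - {m3,m4}. rep g = rep h" if "g \<in> {m3,m4}" for g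
        using that rep_eq by (intro bexI[of _ m2]) auto
    qed
    then show "card (rep ` conflicts {r,x2}) \<le> 22" using d(1) by simp
    have "card (rep ` conflicts {r,x3}) + card {m3,m4} + card (links r x3) \<le> 24"
    proof (rule card_rep_conflicts_savings[OF xE(3)])
      show "{m3,m4} \<subseteq> conflicts {r,x3}" using M(1) by auto
      have "m2 \<in> conflicts {r,x3} - {m3,m4}" using M(1) d(1) by auto
      then show "\<exists>h\<in>conflicts {r,x3} - {m3,m4}. rep g = rep h" if "g \<in> {m3,m4}" for g
        using that rep_eq by (intro bexI[of _ m2]) auto
    qed
    then show "card (rep ` conflicts {r,x3}) \<le> 23" using d(1) by simp
  qed (use in_E d(2,3) in auto)
qed

lemma star_root_colourable:
  assumes r: "r \<in> V" and no_c4: "c4_free_component r"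
  shows "strongly_colourable 22 (component r)"
proof -
  obtain x1 x2 x3 x4 a2 a3 a4 b b' w w' where nbr: "nbhd r = {x1,x2,x3,x4}"
    and d: "distinct [r,x1,x2,a2,x3,a3,x4,a4,b,w,b',w']"
    and in_E: "{x2,a2} \<in> E" "{x3,a3} \<in> E" "{x4,a4} \<in> E" "{x1,b} \<in> E" "{x1,b'} \<in> E" "{b,w} \<in> E" "{b',w'} \<in> E"
    and N: "{x2,a3} \<notin> E" "{x2,a4} \<notin> E" "{x3,a2} \<notin> E" "{x3,a4} \<notin> E" "{x4,a2} \<notin> E" "{x4,a3} \<notin> E"
      "{a2,a3} \<notin> E" "{a2,a4} \<notin> E" "{a3,a4} \<notin> E"
      "{b,b'} \<notin> E" "{b,w'} \<notin> E" "{w,b'} \<notin> E" "{w,w'} \<notin> E"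
    by (rule star_configuration[OF r no_c4])
  have xE: "{r,x1} \<in> E" "{r,x2} \<in> E" "{r,x3} \<in> E" "{r,x4} \<in> E" using nbr by (auto simp: nbhd_def)
  have xx: "{x2,x3} \<notin> E" "{x2,x4} \<notin> E" "{x3,x4} \<notin> E"
    using triangle_free[of x2 r x3] triangle_free[of x2 r x4] triangle_free[of x3 r x4] xE
    by (auto simp: insert_commute)
  have path: "{w0,x0} \<in> conflicts {u0,v0}"
    if "distinct [u0,v0,w0,x0]" "{u0,v0} \<in> E" "{v0,w0} \<in> E" "{w0,x0} \<in> E" for u0 v0 w0 x0
    using conflicts_path3(1)[OF that] .
  have share: "g \<in> conflicts f" if "g \<in> E" "f \<noteq> g" "z \<in> f" "z \<in> g" for f g z
    using conflict_if_share[OF that(2-4)] that(1) by (simp add: conflicts_def)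
  have "{x2,a2} \<in> conflicts {r,x1}" "{x3,a3} \<in> conflicts {r,x1}" "{x4,a4} \<in> conflicts {r,x1}"
    "{b,w} \<in> conflicts {r,x1}" "{b',w'} \<in> conflicts {r,x1}"
    using path[of x1 r x2 a2] path[of x1 r x3 a3] path[of x1 r x4 a4] path[of r x1 b w] path[of r x1 b' w']
      d xE in_E by (auto simp: insert_commute)
  moreover have "{x2,a2} \<in> conflicts {r,x2}" "{x3,a3} \<in> conflicts {r,x2}" "{x4,a4} \<in> conflicts {r,x2}"
    using share[of "{x2,a2}" "{r,x2}" x2] path[of x2 r x3 a3] path[of x2 r x4 a4] d xE in_E
    by (auto simp: insert_commute doubleton_eq_iff)
  moreover have "{x2,a2} \<in> conflicts {r,x3}" "{x3,a3} \<in> conflicts {r,x3}" "{x4,a4} \<in> conflicts {r,x3}"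
    using share[of "{x3,a3}" "{r,x3}" x3] path[of x3 r x2 a2] path[of x3 r x4 a4] d xE in_E
    by (auto simp: insert_commute doubleton_eq_iff)
  moreover have "\<not> conflict {x2,a2} {x3,a3}" "\<not> conflict {x2,a2} {x4,a4}" "\<not> conflict {x3,a3} {x4,a4}"
    "\<not> conflict {b,w} {b',w'}"
    using not_conflict_far_edges[of x2 a2 x3 a3] not_conflict_far_edges[of x2 a2 x4 a4]
      not_conflict_far_edges[of x3 a3 x4 a4] not_conflict_far_edges[of b w b' w'] d xx N
    by (auto simp: insert_commute)
  moreover have "distinct [{x2,a2},{x3,a3},{x4,a4},{b,w},{b',w'}]"
    using d by (auto simp: doubleton_eq_iff)
  moreover have "pairwise disjnt {{x2,a2},{x3,a3},{x4,a4},{b,w},{b',w'}}"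
    using d by (auto simp: pairwise_def disjnt_def)
  ultimately show ?thesis
    using star_root_colourable_merged[OF r nbr, of "{x2,a2}" "{x3,a3}" "{x4,a4}" "{b,w}" "{b',w'}"] d
    by simp
qed

lemma component_colourable:
  assumes "r \<in> V"
  shows "strongly_colourable 22 (component r)"
proof (cases "c4_free_component r")
  case True
  then show ?thesis using star_root_colourable[OF assms] by blast
next
  case False
  then obtain a b c d where "a \<in> component r" "four_cycle a b c d"
    by (auto simp: c4_free_component_def)
  then show ?thesis using four_cycle_colourable[of a b c d] component_eq[of a r] by simp
qed

theorem strongly_colourable_22: "strongly_colourable 22 V"
  using strongly_colourable_if_components component_colourable by blast

lemma strong_edge_coloring_iff:
  "strong_edge_coloring E c \<longleftrightarrow> (\<forall>e\<in>E. \<forall>f\<in>E. conflict e f \<longrightarrow> c e \<noteq> c f)"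
  unfolding strong_edge_coloring_def conflict_def by (intro iffI conjI ballI impI) auto

end

lemma triangle_free_if_girth_4:
  assumes "simple_graph V E" "girth V E = 4" "{x,y} \<in> E" "{y,z} \<in> E" "{x,z} \<in> E"
  shows False
proof -
  have "card {x,y} = 2" "card {y,z} = 2" "card {x,z} = 2" "{x,y,z} \<subseteq> V"
    using assms(1,3-5) by (auto simp: simple_graph_def)
  then have "x \<noteq> y" "y \<noteq> z" "x \<noteq> z" "{x,y,z} \<subseteq> V" by auto
  moreover have "{[x,y,z] ! i, [x,y,z] ! ((i + 1) mod 3)} \<in> E" if "i < 3" for i
  proof -
    have "i = 0 \<or> i = 1 \<or> i = 2" using that by auto
    then show ?thesis using assms(3-5) by (auto simp: insert_commute)
  qed
  ultimately have "has_cycle V E 3"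
    unfolding has_cycle_def by (intro conjI exI[of _ "[x,y,z]"]) auto
  then have "(LEAST k. has_cycle V E k) \<le> 3" by (rule Least_le)
  moreover have "\<exists>k. has_cycle V E k" using \<open>has_cycle V E 3\<close> by blast
  then have "(LEAST k. has_cycle V E k) = 4" using assms(2) by (simp add: girth_def numeral_eq_enat)
  ultimately show False by simp
qed

theorem lemma6:
  fixes V :: "'a set" and E :: "'a set set"
  assumes "simple_graph V E"
    and "regular V E 4"
    and "girth V E = 4"
  shows "\<exists>c :: 'a set \<Rightarrow> nat. strong_edge_coloring E c \<and> card (c ` E) \<le> 22"
proof -
  interpret quartic_triangle_free V E
  proof
    show "simple_graph V E" "regular V E 4" by (fact assms(1), fact assms(2))
    show False if "{x,y} \<in> E" "{y,z} \<in> E" "{x,z} \<in> E" for x y z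
      using triangle_free_if_girth_4[OF assms(1,3) that] .
  qed
  have "edges_within V = E" using assms(1) by (auto simp: edges_within_def simple_graph_def)
  then obtain c :: "'a set \<Rightarrow> nat" where "\<forall>e\<in>E. c e < 22" "\<forall>e\<in>E. \<forall>f\<in>E. conflict e f \<longrightarrow> c e \<noteq> c f"
    using strongly_colourable_22 unfolding strongly_colourable_def strong_colouring_def by auto
  moreover have "card (c ` E) \<le> card {..<22::nat}" if "\<forall>e\<in>E. c e < 22"
    using that by (intro card_mono) auto
  ultimately show ?thesis using strong_edge_coloring_iff[of c] by auto
qed

end
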